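(* Let $(\eta,\theta)\in\mathcal{R}$, let $P(u_m,v_m)$ and $Q(u_M,v_M)$ be the two fold points of the critical manifold $M_{20}$, and suppose the interior equilibrium $E_*=(u_*,v_* )$ exists and satisfies $u_*>u_M$. Then for every sufficiently small $\epsilon>0$, $E_*$ is globally stable for the system $$\frac{du}{dt}=u(1-u)(u+\theta)(u^2+\eta)-u^2v,\qquad \frac{dv}{dt}=\epsilon\big(u^2v-\delta v(u^2+\eta)\big),$$ i.e., it is locally stable and every trajectory starting in the open first quadrant converges to $E_*$ as $t\to\infty$.
   Context: Parameters are $\delta,\theta,\eta>0$. Let $\phi(u)=\frac1u(1-u)(u+\theta)(u^2+\eta)$ and the critical manifold $M_{20}=\{(u,v):u>0,\ v=\phi(u)\}$. Let $\Gamma=9\theta^2+6\theta+9-24\eta$, $\Lambda_1=\frac{\eta}{8}(\theta^2+\frac{22}{3}\theta+1)-\frac{1}{96}(3(1+\theta^4)+2(\theta^2+4\eta^2))$ and $\Lambda_2=\frac{1-\theta}{288}(3\theta^2+2\theta+3-8\eta)$. Define - $\mathcal{R}_1=\{0<\eta<\theta\le1,\ \frac{\sqrt\Gamma}{3}-3<\theta<1+\frac{\sqrt\Gamma}{3},\ \Gamma>(\Lambda_1/\Lambda_2)^2\}$, - $\mathcal{R}_2=\{0<\eta<1<\theta,\ \frac{\sqrt\Gamma}{3}-3<\theta<1+\frac{\sqrt\Gamma}{3},\ \Gamma<(\Lambda_1/\Lambda_2)^2\}$, - $\mathcal{R}_3=\{0<\theta<1<\eta,\ \frac{\sqrt\Gamma}{3}-3<\theta<1,\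 \Gamma>(\Lambda_1/\Lambda_2)^2\}$, and $\mathcal{R}=\mathcal{R}_1\cup\mathcal{R}_2\cup\mathcal{R}_3$. For $(\eta,\theta)\in\mathcal{R}$, $\phi$ has exactly two critical points in $(0,1)$: a local minimum $u_m$ and a local maximum $u_M>u_m$, giving fold points $P=(u_m,\phi(u_m))$ and $Q=(u_M,\phi(u_M))$. The interior equilibrium is $E_*=(u_*,v_* )$ with $u_*=\sqrt{\delta\eta/(1-\delta)}$ and $v_*=\phi(u_* )$. It lies in the open first quadrant when $\delta<1/(1+\eta)$. *)

theory Defs
  imports "HOL-Analysis.Analysis"
begin

definition phi :: "real \<Rightarrow> real \<Rightarrow> real \<Rightarrow> real" where
  "phi \<theta> \<eta> u = (1 / u) * (1 - u) * (u + \<theta>) * (u^2 + \<eta>)"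

definition Gam :: "real \<Rightarrow> real \<Rightarrow> real" where
  "Gam \<theta> \<eta> = 9*\<theta>^2 + 6*\<theta> + 9 - 24*\<eta>"

definition Lam1 :: "real \<Rightarrow> real \<Rightarrow> real" where
  "Lam1 \<theta> \<eta> = \<eta>/8 * (\<theta>^2 + 22/3*\<theta> + 1)
      - 1/96 * (3*(1 + \<theta>^4) + 2*(\<theta>^2 + 4*\<eta>^2))"

definition Lam2 :: "real \<Rightarrow> real \<Rightarrow> real" where
  "Lam2 \<theta> \<eta> = (1 - \<theta>)/288 * (3*\<theta>^2 + 2*\<theta> + 3 - 8*\<eta>)"

definition region_R :: "real \<Rightarrow> real \<Rightarrow> bool" where
  "region_R \<eta> \<theta> \<longleftrightarrow>
     (0 < \<eta> \<and> \<eta> < \<theta> \<and> \<theta> \<le> 1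
       \<and> sqrt (Gam \<theta> \<eta>)/3 - 3 < \<theta> \<and> \<theta> < 1 + sqrt (Gam \<theta> \<eta>)/3
       \<and> Gam \<theta> \<eta> > (Lam1 \<theta> \<eta> / Lam2 \<theta> \<eta>)^2)
   \<or> (0 < \<eta> \<and> \<eta> < 1 \<and> 1 < \<theta>
       \<and> sqrt (Gam \<theta> \<eta>)/3 - 3 < \<theta> \<and> \<theta> < 1 + sqrt (Gam \<theta> \<eta>)/3
       \<and> Gam \<theta> \<eta> < (Lam1 \<theta> \<eta> / Lam2 \<theta> \<eta>)^2)
   \<or> (0 < \<theta> \<and> \<theta> < 1 \<and> 1 < \<eta>
       \<and> sqrt (Gam \<theta> \<eta>)/3 - 3 < \<theta> \<and> \<theta> < 1
       \<and> Gam \<theta> \<eta> > (Lam1 \<theta> \<eta> / Lam2 \<theta> \<eta>)^2)"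

definition fold_max :: "real \<Rightarrow> real \<Rightarrow> real \<Rightarrow> bool" where
  "fold_max \<theta> \<eta> uM \<longleftrightarrow>
     0 < uM \<and> uM < 1 \<and> deriv (phi \<theta> \<eta>) uM = 0
     \<and> (\<exists>r>0. \<forall>u. \<bar>u - uM\<bar> < r \<longrightarrow> phi \<theta> \<eta> u \<le> phi \<theta> \<eta> uM)
     \<and> (\<forall>u. 0 < u \<and> u < 1 \<and> deriv (phi \<theta> \<eta>) u = 0 \<longrightarrow> u \<le> uM)"

definition vfield :: "real \<Rightarrow> real \<Rightarrow> real \<Rightarrow> real \<Rightarrow> real \<times> real \<Rightarrow> real \<times> real" where
  "vfield \<delta> \<theta> \<eta> \<epsilon> p =
     (fst p*(1-fst p)*(fst p+\<theta>)*((fst p)^2+\<eta>) - (fst p)^2 * snd p,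
      \<epsilon> * ((fst p)^2 * snd p - \<delta> * snd p*((fst p)^2+\<eta>)))"

definition is_solution :: "real \<Rightarrow> real \<Rightarrow> real \<Rightarrow> real \<Rightarrow> (real \<Rightarrow> real \<times> real) \<Rightarrow> bool" where
  "is_solution \<delta> \<theta> \<eta> \<epsilon> x \<longleftrightarrow>
     (\<forall>t\<ge>0. (x has_vector_derivative vfield \<delta> \<theta> \<eta> \<epsilon> (x t)) (at t within {0..}))"

definition u_star :: "real \<Rightarrow> real \<Rightarrow> real" where
  "u_star \<delta> \<eta> = sqrt (\<delta>*\<eta>/(1-\<delta>))"

definition E_star :: "real \<Rightarrow> real \<Rightarrow> real \<Rightarrow> real \<times> real" where
  "E_star \<delta> \<theta> \<eta> = (u_star \<delta> \<eta>, phi \<theta> \<eta> (u_star \<delta> \<eta>))"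

definition lyap_stable :: "real \<Rightarrow> real \<Rightarrow> real \<Rightarrow> real \<Rightarrow> real \<times> real \<Rightarrow> bool" where
  "lyap_stable \<delta> \<theta> \<eta> \<epsilon> E \<longleftrightarrow>
     (\<forall>e>0. \<exists>d>0. \<forall>x. is_solution \<delta> \<theta> \<eta> \<epsilon> x \<and> dist (x 0) E < d
        \<longrightarrow> (\<forall>t\<ge>0. dist (x t) E < e))"

end

theory Submission
  imports Defs
begin

text \<open>For small \<open>\<epsilon>\<close> the prey equation is fast. Fix levels \<open>c < u\<^sub>M < u2 < u\<^sup>*\<close> and \<open>h\<close>
  between \<open>v\<^sup>*\<close> and \<open>phi c\<close>, and let the trap be the pentagon in \<open>[c, 2] \<times> (0, h]\<close> cut off by a line
  of small negative slope through \<open>(u2, h)\<close>. The vector field points into the trap on every edge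
  (on the slanted one the drift of \<open>v\<close> is \<open>O(\<epsilon>)\<close> while \<open>u\<close> decreases at an \<open>\<epsilon>\<close>-independent
  rate), and every orbit in the open quadrant enters it.

  Along solutions the function \<open>W(u, v) = \<epsilon> (1 - \<delta>) (u - u\<^sup>*)\<^sup>2 / u + v - v\<^sup>* - v\<^sup>* ln (v / v\<^sup>*)\<close>
  has derivative \<open>\<epsilon> (1 - \<delta>) (u\<^sup>2 - u\<^sup>*\<^sup>2) (phi u - v\<^sup>*)\<close>, which is \<open>\<le> 0\<close> for \<open>u \<ge> c\<close> because
  \<open>u\<^sup>*\<close> lies beyond the fold, where \<open>phi\<close> is decreasing. So \<open>W\<close> decreases at a definite rate
  while \<open>u\<close> stays away from \<open>u\<^sup>*\<close>, which forces \<open>u \<rightarrow> u\<^sup>*\<close>; then \<open>v \<rightarrow> v\<^sup>*\<close>, since a persistent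
  gap would make the fast variable \<open>u\<close> drift. Small sublevel sets of \<open>W\<close> lie in \<open>u > c\<close> and
  shrink to \<open>E\<^sub>*\<close>, which gives stability.\<close>

section \<open>Calculus on the half-line\<close>

lemma increment_ge_of_DERIV_ge:
  fixes f :: "real \<Rightarrow> real"
  assumes der: "\<And>t. 0 \<le> t \<Longrightarrow> (f has_real_derivative f' t) (at t within {0..})"
    and "0 \<le> a" "a \<le> b" and bnd: "\<And>t. a < t \<Longrightarrow> t < b \<Longrightarrow> m \<le> f' t"
  shows "f a + m * (b - a) \<le> f b"
proof (cases "a = b")
  case False
  have "(f has_derivative (\<lambda>h. f' t * h)) (at t within {a..b})" if "a \<le> t" "t \<le> b" for t
    using DERIV_subset[OF der, of t "{a..b}"] that assms(2) by (auto simp: has_field_derivative_def)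
  then obtain z where "a < z" "z < b" "f b - f a = f' z * (b - a)"
    using mvt_simple[of a b f] False assms(3) by force
  moreover have "m * (b - a) \<le> f' z * (b - a)"
    using bnd \<open>a < z\<close> \<open>z < b\<close> assms(3) by (simp add: mult_right_mono)
  ultimately show ?thesis by linarith
qed simp

lemma increment_le_of_DERIV_le:
  fixes f :: "real \<Rightarrow> real"
  assumes der: "\<And>t. 0 \<le> t \<Longrightarrow> (f has_real_derivative f' t) (at t within {0..})"
    and "0 \<le> a" "a \<le> b" and bnd: "\<And>t. a < t \<Longrightarrow> t < b \<Longrightarrow> f' t \<le> M"
  shows "f b \<le> f a + M * (b - a)"
  using increment_ge_of_DERIV_ge[where f = "\<lambda>t. - f t" and f' = "\<lambda>t. - f' t" and m = "- M"] assms
  by (force intro: derivative_eq_intros)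

lemma increment_ge_of_DERIV_ge_square:
  fixes f :: "real \<Rightarrow> real"
  assumes der: "\<And>t. 0 \<le> t \<Longrightarrow> (f has_real_derivative f' t) (at t within {0..})"
    and "0 \<le> s" "0 < f s" "0 < m" "0 < K" and bnd: "\<And>t. s < t \<Longrightarrow> m * (f t)^2 \<le> f' t"
  shows "f s + K \<le> f (s + K / (m * (f s)^2))"
proof -
  have "f s \<le> f t" if "s \<le> t" for t
  proof -
    have "f s + 0 * (t - s) \<le> f t"
      using \<open>0 < m\<close> by (intro increment_ge_of_DERIV_ge[OF der \<open>0 \<le> s\<close> that] order_trans[OF _ bnd]) auto
    then show ?thesis by simp
  qed
  then have "m * (f s)^2 \<le> f' t" if "s < t" for t
    using bnd[OF that] \<open>0 < m\<close> \<open>0 < f s\<close> that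
    by (meson less_imp_le mult_left_mono order_trans power_mono)
  moreover define \<tau> where "\<tau> = K / (m * (f s)^2)"
  moreover have "0 \<le> \<tau>" using \<open>0 < m\<close> \<open>0 < K\<close> by (simp add: \<tau>_def)
  ultimately have "f s + (m * (f s)^2) * ((s + \<tau>) - s) \<le> f (s + \<tau>)"
    by (intro increment_ge_of_DERIV_ge[OF der \<open>0 \<le> s\<close>]) auto
  then show ?thesis using \<open>0 < m\<close> \<open>0 < f s\<close> by (simp add: \<tau>_def)
qed

lemma norm_increment_le_of_vector_derivative_le:
  fixes f :: "real \<Rightarrow> 'a::real_normed_vector"
  assumes der: "\<And>t. 0 \<le> t \<Longrightarrow> (f has_vector_derivative f' t) (at t within {0..})"
    and "0 \<le> a" "a \<le> b" and bnd: "\<And>t. a \<le> t \<Longrightarrow> t \<le> b \<Longrightarrow> norm (f' t) \<le> M"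
  shows "norm (f b - f a) \<le> M * (b - a)"
proof -
  have "norm (f b - f a) \<le> M * norm (b - a)"
  proof (rule differentiable_bound[where f' = "\<lambda>t h. h *\<^sub>R f' t"])
    fix t assume t: "t \<in> {a..b}"
    show "(f has_derivative (\<lambda>h. h *\<^sub>R f' t)) (at t within {a..b})"
      using has_vector_derivative_within_subset[OF der, of t "{a..b}"] t assms(2)
      by (auto simp: has_vector_derivative_def)
    show "onorm (\<lambda>h. h *\<^sub>R f' t) \<le> M"
      using bnd t onorm_scaleR_left[OF bounded_linear_ident, of "f' t"] by (simp add: onorm_id)
  qed (use assms in auto)
  then show ?thesis using assms(3) by simp
qed

lemma eventually_at_right_nonpos_of_DERIV:
  fixes g :: "real \<Rightarrow> real"
  assumes der: "(g has_real_derivative D) (at s within {0..})" and "0 \<le> s"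
    and "g s \<le> 0" and "g s = 0 \<Longrightarrow> D < 0"
  shows "\<forall>\<^sub>F t in at_right s. g t \<le> 0"
proof (cases "g s = 0")
  case True
  then obtain d where "0 < d" "\<And>h. 0 < h \<Longrightarrow> s + h \<in> {0..} \<Longrightarrow> h < d \<Longrightarrow> g (s + h) < g s"
    using has_real_derivative_neg_dec_right[OF der] assms(4) by blast
  moreover have "g t < 0" if "s < t" "t < s + d" for t
    using \<open>\<And>h. 0 < h \<Longrightarrow> s + h \<in> {0..} \<Longrightarrow> h < d \<Longrightarrow> g (s + h) < g s\<close>[of "t - s"]
      that True \<open>0 \<le> s\<close> by simp
  ultimately show ?thesis
    unfolding eventually_at_right_field by (intro exI[of _ "s + d"]) (force intro: less_imp_le)
next
  case False
  have "(g has_real_derivative D) (at s within {s<..})"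
    by (rule DERIV_subset[OF der]) (use \<open>0 \<le> s\<close> in auto)
  then have "(g \<longlongrightarrow> g s) (at_right s)"
    using DERIV_continuous continuous_within by blast
  moreover have "g s < 0" using False \<open>g s \<le> 0\<close> by simp
  ultimately have "\<forall>\<^sub>F t in at_right s. g t < 0" by (rule order_tendstoD(2))
  then show ?thesis by (rule eventually_mono) simp
qed

lemma finite_constraints_forward_invariant:
  fixes g :: "'i \<Rightarrow> real \<Rightarrow> real"
  assumes "finite I"
    and der: "\<And>i t. i \<in> I \<Longrightarrow> 0 \<le> t \<Longrightarrow> (g i has_real_derivative g' i t) (at t within {0..})"
    and "0 \<le> t0" and init: "\<And>i. i \<in> I \<Longrightarrow> g i t0 \<le> 0"
    and inward: "\<And>i t. i \<in> I \<Longrightarrow> t0 \<le> t \<Longrightarrow> \<forall>j\<in>I. g j t \<le> 0 \<Longrightarrow> g i t = 0 \<Longrightarrow> g' i t < 0"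
    and "t0 \<le> t1"
  shows "\<forall>i\<in>I. g i t1 \<le> 0"
proof (rule ccontr)
  assume violated: "\<not> (\<forall>i\<in>I. g i t1 \<le> 0)"
  define S where "S = {t0..t1} \<inter> (\<Inter>i\<in>I. {t \<in> {t0..t1}. g i t \<le> 0})"
  have "continuous_on {t0..t1} (g i)" if "i \<in> I" for i
    using continuous_on_subset[OF DERIV_continuous_on[OF der]] that \<open>0 \<le> t0\<close> by force
  then have "closed S"
    unfolding S_def by (intro closed_Int closed_INT ballI continuous_on_closed_Collect_le) auto
  moreover have "t0 \<in> S" using init \<open>t0 \<le> t1\<close> by (auto simp: S_def)
  moreover have "bdd_above S" by (auto simp: S_def)
  ultimately have "Sup S \<in> S" using closed_contains_Sup by blast
  define s where "s = Sup S"
  have s: "t0 \<le> s" "s \<le> t1" "\<forall>i\<in>I. g i s \<le> 0"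
    using \<open>Sup S \<in> S\<close> by (auto simp: S_def s_def)
  have "\<forall>i\<in>I. \<forall>\<^sub>F t in at_right s. g i t \<le> 0"
  proof
    fix i assume i: "i \<in> I"
    show "\<forall>\<^sub>F t in at_right s. g i t \<le> 0"
      by (rule eventually_at_right_nonpos_of_DERIV[OF der[OF i]])
        (use i s \<open>0 \<le> t0\<close> inward[OF i s(1) s(3)] in auto)
  qed
  then have "\<forall>\<^sub>F t in at_right s. \<forall>i\<in>I. g i t \<le> 0"
    by (rule eventually_ball_finite[OF \<open>finite I\<close>])
  then obtain b where b: "s < b" "\<And>t. s < t \<Longrightarrow> t < b \<Longrightarrow> \<forall>i\<in>I. g i t \<le> 0"
    unfolding eventually_at_right_field by blast
  have "s < t1" using s violated by (cases "s = t1") auto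
  define t where "t = min ((s + b) / 2) ((s + t1) / 2)"
  have "s < t" "t < b" "t < t1"
    using b(1) \<open>s < t1\<close> by (auto simp: t_def min_def)
  then have t: "s < t" "t < t1" "\<forall>i\<in>I. g i t \<le> 0"
    using b(2) by auto
  then have "t \<in> S" using s by (auto simp: S_def)
  then have "t \<le> s" unfolding s_def using \<open>bdd_above S\<close> by (rule cSup_upper)
  with t show False by simp
qed

lemma forward_invariant_le:
  fixes f :: "real \<Rightarrow> real"
  assumes der: "\<And>t. 0 \<le> t \<Longrightarrow> (f has_real_derivative f' t) (at t within {0..})"
    and "0 \<le> t0" "f t0 \<le> K" and inward: "\<And>t. t0 \<le> t \<Longrightarrow> f t = K \<Longrightarrow> f' t < 0"
    and "t0 \<le> t1"
  shows "f t1 \<le> K"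
proof -
  have "\<forall>i\<in>{()}. f t1 - K \<le> 0"
    by (rule finite_constraints_forward_invariant[where g = "\<lambda>_ t. f t - K" and g' = "\<lambda>_ t. f' t"])
      (use assms in \<open>auto intro!: derivative_eq_intros\<close>)
  then show ?thesis by simp
qed

lemma sublevel_forward_invariant:
  fixes f :: "real \<Rightarrow> real"
  assumes der: "\<And>t. 0 \<le> t \<Longrightarrow> (f has_real_derivative f' t) (at t within {0..})"
    and "0 \<le> a" "f a < K" and nonincr: "\<And>t. a < t \<Longrightarrow> f t < K \<Longrightarrow> f' t \<le> 0"
    and "a \<le> t1"
  shows "f t1 \<le> f a"
proof (rule ccontr)
  assume "\<not> f t1 \<le> f a"
  define y where "y = min K (f t1)"
  have y: "f a < y" "y \<le> K" "y \<le> f t1" using \<open>f a < K\<close> \<open>\<not> f t1 \<le> f a\<close> by (auto simp: y_def)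
  define C where "C = {t \<in> {a..t1}. y \<le> f t}"
  have "continuous_on {a..t1} f"
    using continuous_on_subset[OF DERIV_continuous_on[OF der]] \<open>0 \<le> a\<close> by force
  then have "closed C"
    unfolding C_def by (intro continuous_on_closed_Collect_le continuous_on_const) auto
  moreover have "t1 \<in> C" using \<open>a \<le> t1\<close> y by (simp add: C_def)
  moreover have "bdd_below C" by (auto simp: C_def)
  ultimately have "Inf C \<in> C" using closed_contains_Inf by blast
  define s where "s = Inf C"
  have s: "a \<le> s" "y \<le> f s" using \<open>Inf C \<in> C\<close> by (auto simp: C_def s_def)
  have below: "f t < y" if "a \<le> t" "t < s" for t
  proof (rule ccontr)
    assume "\<not> f t < y"
    then have "t \<in> C" using that \<open>Inf C \<in> C\<close> by (auto simp: C_def s_def)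
    then have "s \<le> t" unfolding s_def using \<open>bdd_below C\<close> by (rule cInf_lower)
    with that show False by simp
  qed
  have "f t < K" if "a < t" "t < s" for t
    using below[of t] that y(2) by linarith
  then have "f s \<le> f a + 0 * (s - a)"
    by (intro increment_le_of_DERIV_le[OF der \<open>0 \<le> a\<close> s(1)] nonincr) auto
  with s y show False by simp
qed

lemma positive_of_DERIV_proportional:
  fixes f :: "real \<Rightarrow> real"
  assumes der: "\<And>t. 0 \<le> t \<Longrightarrow> (f has_real_derivative f t * g t) (at t within {0..})"
    and "continuous_on {0..} g" and "0 < f 0" and "0 \<le> t1"
  shows "0 < f t1"
proof (rule ccontr)
  assume "\<not> 0 < f t1"
  define C where "C = {t \<in> {0..t1}. f t \<le> 0}"
  have "continuous_on {0..t1} f"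
    using continuous_on_subset[OF DERIV_continuous_on[OF der]] by force
  then have "closed C"
    unfolding C_def by (intro continuous_on_closed_Collect_le continuous_on_const) auto
  moreover have "t1 \<in> C" using \<open>0 \<le> t1\<close> \<open>\<not> 0 < f t1\<close> by (simp add: C_def)
  moreover have "bdd_below C" by (auto simp: C_def)
  ultimately have "Inf C \<in> C" using closed_contains_Inf by blast
  define s where "s = Inf C"
  have s: "0 \<le> s" "f s \<le> 0" using \<open>Inf C \<in> C\<close> by (auto simp: C_def s_def)
  have above: "0 < f t" if "0 \<le> t" "t < s" for t
  proof (rule ccontr)
    assume "\<not> 0 < f t"
    then have "t \<in> C" using that \<open>Inf C \<in> C\<close> by (auto simp: C_def s_def)
    then have "s \<le> t" unfolding s_def using \<open>bdd_below C\<close> by (rule cInf_lower)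
    with that show False by simp
  qed
  have "compact (g ` {0..s})"
    by (intro compact_continuous_image continuous_on_subset[OF \<open>continuous_on {0..} g\<close>]) auto
  then obtain G where "\<forall>y \<in> g ` {0..s}. \<bar>y\<bar> \<le> G"
    using compact_imp_bounded bounded_real by blast
  then have G: "\<bar>g t\<bar> \<le> G" if "t \<in> {0..s}" for t
    using that by blast
  \<comment> \<open>The integrating factor \<open>exp (G t)\<close> turns \<open>f\<close> into a nondecreasing function on \<open>[0, s]\<close>.\<close>
  define h where "h t = f t * exp (G * t)" for t
  have "(h has_real_derivative exp (G * t) * (f t * (g t + G))) (at t within {0..})" if "0 \<le> t" for t
    unfolding h_def using der[OF that] by (auto intro!: derivative_eq_intros simp: algebra_simps)
  then have "h 0 + 0 * (s - 0) \<le> h s"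
  proof (rule increment_ge_of_DERIV_ge)
    fix t assume "0 < t" "t < s"
    then show "0 \<le> exp (G * t) * (f t * (g t + G))"
      using above[of t] G[of t] by (simp add: abs_le_iff)
  qed (use s in auto)
  moreover have "f s * exp (G * s) \<le> 0" using s(2) by (simp add: mult_nonpos_nonneg)
  ultimately show False using \<open>0 < f 0\<close> by (simp add: h_def)
qed

lemma eventually_not_of_drops:
  fixes W :: "real \<Rightarrow> real"
  assumes mono: "\<And>a b. T \<le> a \<Longrightarrow> a \<le> b \<Longrightarrow> W b \<le> W a"
    and bdd: "\<And>t. T \<le> t \<Longrightarrow> B \<le> W t" and "0 < D" "0 \<le> \<tau>"
    and drop: "\<And>t. T \<le> t \<Longrightarrow> P t \<Longrightarrow> W (t + \<tau>) \<le> W t - D"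
  shows "\<exists>N. \<forall>t\<ge>N. \<not> P t"
proof (rule ccontr)
  assume "\<not> ?thesis"
  then have often: "\<exists>t\<ge>N. P t" for N by blast
  have "\<exists>t\<ge>T. W t \<le> W T - real n * D" for n
  proof (induction n)
    case (Suc n)
    then obtain t where t: "T \<le> t" "W t \<le> W T - real n * D" by blast
    obtain t' where t': "t \<le> t'" "P t'" using often by blast
    have "W (t' + \<tau>) \<le> W t - D"
      using drop[of t'] mono[of t t'] t t' by linarith
    then show ?case using t t' \<open>0 \<le> \<tau>\<close> by (intro exI[of _ "t' + \<tau>"]) (auto simp: algebra_simps)
  qed auto
  moreover obtain n :: nat where "(W T - B) / D < n" using reals_Archimedean2 by blast
  ultimately obtain t where "T \<le> t" "W t \<le> W T - real n * D" "W T - B < real n * D"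
    using \<open>0 < D\<close> by (auto simp: field_simps)
  then show False using bdd[of t] by linarith
qed

lemma compact_pos_lower_bound:
  fixes w :: "'a::topological_space \<Rightarrow> real"
  assumes "compact K" "continuous_on K w" "\<And>y. y \<in> K \<Longrightarrow> 0 < w y"
  obtains m where "0 < m" "\<And>y. y \<in> K \<Longrightarrow> m \<le> w y"
proof (cases "K = {}")
  case False
  then obtain y0 where "y0 \<in> K" "\<And>y. y \<in> K \<Longrightarrow> w y0 \<le> w y"
    using continuous_attains_inf[OF assms(1) False assms(2)] by blast
  then show ?thesis using that assms(3) by blast
qed (use that[of 1] in auto)

section \<open>The critical manifold\<close>

lemma phi_times_square: "u \<noteq> 0 \<Longrightarrow> u^2 * phi \<theta> \<eta> u = u * (1 - u) * (u + \<theta>) * (u^2 + \<eta>)"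
  unfolding phi_def by (simp add: field_simps power2_eq_square)

lemma phi_differentiable: "u \<noteq> 0 \<Longrightarrow> phi \<theta> \<eta> differentiable (at u)"
  unfolding phi_def[abs_def] by (intro derivative_intros) auto

lemma isCont_phi: "u \<noteq> 0 \<Longrightarrow> isCont (phi \<theta> \<eta>) u"
  by (rule differentiable_imp_continuous_within[OF phi_differentiable])

lemma continuous_on_phi: "0 \<notin> S \<Longrightarrow> continuous_on S (phi \<theta> \<eta>)"
  using isCont_phi by (metis continuous_at_imp_continuous_on)

lemma phi_pos: "0 < u \<Longrightarrow> u < 1 \<Longrightarrow> 0 < \<theta> \<Longrightarrow> 0 < \<eta> \<Longrightarrow> 0 < phi \<theta> \<eta> u"
  unfolding phi_def by (simp add: add_pos_nonneg)

lemma phi_neg: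
  assumes "1 < u" "0 < \<theta>" "0 < \<eta>"
  shows "phi \<theta> \<eta> u < 0"
proof -
  have "(1 - u) * ((u + \<theta>) * (u^2 + \<eta>)) < 0"
    using assms by (intro mult_neg_pos) (auto simp: add_pos_nonneg)
  then show ?thesis using assms by (simp add: phi_def divide_neg_pos mult.assoc)
qed

lemma phi_lower_bound:
  assumes "0 < \<theta>" "0 < \<eta>" "0 < u" "u \<le> w" "w < 1"
  shows "(1 - w) * \<theta> * \<eta> / w \<le> phi \<theta> \<eta> u"
proof -
  have "(1 - w) / w \<le> (1 - u) / u"
    using assms by (intro frac_le) auto
  moreover have "\<theta> * \<eta> \<le> (u + \<theta>) * (u^2 + \<eta>)"
    using assms by (intro mult_mono) auto
  ultimately have "(1 - w) / w * (\<theta> * \<eta>) \<le> (1 - u) / u * ((u + \<theta>) * (u^2 + \<eta>))"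
    using assms by (intro mult_mono) auto
  then show ?thesis unfolding phi_def by (simp add: field_simps)
qed

text \<open>Beyond the fold \<open>u\<^sub>M\<close> the derivative of \<open>phi\<close> has no zero in \<open>(u\<^sub>M, 1)\<close>, so by Rolle
  \<open>phi\<close> is injective on \<open>[u\<^sub>M, 1]\<close>, hence strictly monotone; it falls because \<open>phi 1 = 0 < phi u\<^sub>M\<close>.\<close>
lemma phi_strict_antimono_after_fold:
  assumes "0 < \<theta>" "0 < \<eta>" and fold: "fold_max \<theta> \<eta> uM"
  shows "strict_antimono_on {uM..1} (phi \<theta> \<eta>)"
proof -
  have uM: "0 < uM" "uM < 1" using fold by (auto simp: fold_max_def)
  have cont: "continuous_on {uM..1} (phi \<theta> \<eta>)" using uM by (intro continuous_on_phi) auto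
  have "inj_on (phi \<theta> \<eta>) {uM..1}"
  proof (rule inj_onI, rule ccontr)
    fix p q assume pq: "p \<in> {uM..1}" "q \<in> {uM..1}" "phi \<theta> \<eta> p = phi \<theta> \<eta> q" "p \<noteq> q"
    have no_critical: False if "min p q < z" "z < max p q" "DERIV (phi \<theta> \<eta>) z :> 0" for z
    proof -
      have "0 < z" "z < 1" "deriv (phi \<theta> \<eta>) z = 0"
        using that pq uM DERIV_imp_deriv by (auto simp: min_def max_def split: if_splits)
      then have "z \<le> uM" using fold by (auto simp: fold_max_def)
      with that pq show False by (auto simp: min_def split: if_splits)
    qed
    have "continuous_on {min p q..max p q} (phi \<theta> \<eta>)"
      using pq by (intro continuous_on_subset[OF cont]) auto
    moreover have "phi \<theta> \<eta> differentiable (at z)" if "min p q < z" for z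
      using that pq uM by (intro phi_differentiable) auto
    ultimately show False
      using Rolle[of "min p q" "max p q" "phi \<theta> \<eta>"] pq no_critical
      by (auto simp: min_def max_def split: if_splits)
  qed
  then have "strict_mono_on {uM..1} (phi \<theta> \<eta>) \<or> strict_antimono_on {uM..1} (phi \<theta> \<eta>)"
    using injective_eq_monotone_map[OF is_interval_cc cont] by blast
  moreover have "phi \<theta> \<eta> 1 < phi \<theta> \<eta> uM"
    using phi_pos[OF uM assms(1,2)] by (simp add: phi_def)
  then have "\<not> strict_mono_on {uM..1} (phi \<theta> \<eta>)"
    using uM by (auto dest: strict_mono_onD[of _ _ uM 1])
  ultimately show ?thesis by blast
qed

lemma phi_times_square_le:
  assumes "2 \<le> u" "0 < \<theta>" "0 < \<eta>"
  shows "u^2 * phi \<theta> \<eta> u \<le> -1"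
proof -
  have "2 * 1 \<le> u * (u - 1)" using assms by (intro mult_mono) auto
  moreover have "2 * 4 \<le> (u + \<theta>) * (u^2 + \<eta>)"
    using assms power_mono[OF assms(1), of 2] by (intro mult_mono) auto
  ultimately have "2 * 8 \<le> (u * (u - 1)) * ((u + \<theta>) * (u^2 + \<eta>))"
    by (intro mult_mono) auto
  then show ?thesis using phi_times_square[of u \<theta> \<eta>] assms(1) by (simp add: algebra_simps)
qed

lemma phi_eps_delta:
  assumes "0 < a" "0 < e"
  obtains d where "0 < d" "\<And>y. \<bar>y - a\<bar> < d \<Longrightarrow> \<bar>phi \<theta> \<eta> y - phi \<theta> \<eta> a\<bar> < e"
  using isCont_phi[of a \<theta> \<eta>] assms unfolding continuous_at_eps_delta dist_real_def by force

lemma vfield_eq: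
  "u \<noteq> 0 \<Longrightarrow> vfield \<delta> \<theta> \<eta> \<epsilon> (u, v) = (u^2 * (phi \<theta> \<eta> u - v), \<epsilon> * v * ((1 - \<delta>) * u^2 - \<delta> * \<eta>))"
  unfolding vfield_def using phi_times_square[of u \<theta> \<eta>] by (simp add: algebra_simps)

lemma is_solution_DERIV:
  assumes "is_solution \<delta> \<theta> \<eta> \<epsilon> x" "0 \<le> t"
  shows "((\<lambda>t. fst (x t)) has_real_derivative fst (vfield \<delta> \<theta> \<eta> \<epsilon> (x t))) (at t within {0..})"
    and "((\<lambda>t. snd (x t)) has_real_derivative snd (vfield \<delta> \<theta> \<eta> \<epsilon> (x t))) (at t within {0..})"
proof -
  have "(x has_vector_derivative vfield \<delta> \<theta> \<eta> \<epsilon> (x t)) (at t within {0..})"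
    using assms by (simp add: is_solution_def)
  from bounded_linear.has_vector_derivative[OF bounded_linear_fst this]
    bounded_linear.has_vector_derivative[OF bounded_linear_snd this]
  show "((\<lambda>t. fst (x t)) has_real_derivative fst (vfield \<delta> \<theta> \<eta> \<epsilon> (x t))) (at t within {0..})"
    and "((\<lambda>t. snd (x t)) has_real_derivative snd (vfield \<delta> \<theta> \<eta> \<epsilon> (x t))) (at t within {0..})"
    by (simp_all add: has_real_derivative_iff_has_vector_derivative)
qed

lemma is_solution_positive:
  assumes sol: "is_solution \<delta> \<theta> \<eta> \<epsilon> x" and "0 < fst (x 0)" "0 < snd (x 0)" "0 \<le> t"
  shows "0 < fst (x t)" "0 < snd (x t)"
proof -
  have cont: "continuous_on {0..} x"
    using sol by (auto simp: is_solution_def continuous_on_eq_continuous_within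
        intro: has_vector_derivative_continuous)
  define g where "g s = (1 - fst (x s)) * (fst (x s) + \<theta>) * ((fst (x s))^2 + \<eta>) - fst (x s) * snd (x s)"
    for s
  define k where "k s = \<epsilon> * ((fst (x s))^2 - \<delta> * ((fst (x s))^2 + \<eta>))" for s
  have "fst (vfield \<delta> \<theta> \<eta> \<epsilon> (x s)) = fst (x s) * g s"
    and "snd (vfield \<delta> \<theta> \<eta> \<epsilon> (x s)) = snd (x s) * k s" for s
    by (simp_all add: vfield_def g_def k_def algebra_simps power2_eq_square)
  moreover have "continuous_on {0..} g" "continuous_on {0..} k"
    unfolding g_def[abs_def] k_def[abs_def] using cont by (auto intro!: continuous_intros)
  ultimately show "0 < fst (x t)" "0 < snd (x t)"
    using positive_of_DERIV_proportional[where f = "\<lambda>t. fst (x t)" and g = g]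
      positive_of_DERIV_proportional[where f = "\<lambda>t. snd (x t)" and g = k]
      is_solution_DERIV[OF sol] assms(2-4) by simp_all
qed

section \<open>Estimates for the Lyapunov function\<close>

definition volterra :: "real \<Rightarrow> real \<Rightarrow> real" where
  "volterra a z = z - a - a * ln (z / a)"

lemma volterra_self: "0 < a \<Longrightarrow> volterra a a = 0"
  by (simp add: volterra_def)

lemma volterra_ge_sqrt_diff:
  assumes "0 < a" "0 < z"
  shows "(sqrt z - sqrt a)^2 \<le> volterra a z"
proof -
  have "ln (sqrt z / sqrt a) \<le> sqrt z / sqrt a - 1"
    using assms by (intro ln_le_minus_one) simp
  moreover have "ln (z / a) = 2 * ln (sqrt z / sqrt a)"
    using assms by (simp add: ln_div ln_sqrt)
  ultimately have "a * ln (z / a) \<le> a * (2 * (sqrt z / sqrt a - 1))"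
    using assms by (intro mult_left_mono) auto
  also have "\<dots> = 2 * (sqrt z * sqrt a) - 2 * a"
    using assms by (simp add: field_simps)
  finally show ?thesis
    using assms by (simp add: volterra_def power2_diff)
qed

lemma volterra_nonneg: "0 < a \<Longrightarrow> 0 < z \<Longrightarrow> 0 \<le> volterra a z"
  using volterra_ge_sqrt_diff[of a z] by (meson order_trans zero_le_power2)

lemma square_diff_lt_of_volterra_lt:
  assumes "0 < a" "0 < z" "volterra a z < q" "q \<le> 1"
  shows "(z - a)^2 < q * (2 * sqrt a + 1)^2"
proof -
  define s where "s = sqrt z - sqrt a"
  have "s^2 < q" using volterra_ge_sqrt_diff[OF assms(1,2)] assms(3) by (simp add: s_def)
  then have "\<bar>s\<bar> < 1" using assms(4) abs_square_less_1[of s] by linarith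
  then have "sqrt z + sqrt a \<le> 2 * sqrt a + 1" by (simp add: s_def abs_less_iff)
  then have "(sqrt z + sqrt a)^2 \<le> (2 * sqrt a + 1)^2" by (intro power_mono) (use assms in auto)
  moreover have "(z - a)^2 = s^2 * (sqrt z + sqrt a)^2"
    using assms by (simp add: s_def power_mult_distrib[symmetric] algebra_simps)
  ultimately have "(z - a)^2 \<le> s^2 * (2 * sqrt a + 1)^2" by (simp add: mult_left_mono)
  also have "\<dots> < q * (2 * sqrt a + 1)^2"
  proof (rule mult_strict_right_mono[OF \<open>s^2 < q\<close>])
    have "0 < 2 * sqrt a + 1" using real_sqrt_gt_zero[OF assms(1)] by linarith
    then show "0 < (2 * sqrt a + 1)^2" by (rule zero_less_power)
  qed
  finally show ?thesis .
qed

lemma square_diff_div_antimono: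
  fixes z w a :: real
  assumes "0 < z" "z \<le> w" "w \<le> a"
  shows "(w - a)^2 / w \<le> (z - a)^2 / z"
proof -
  have "(z - a)^2 / z - (w - a)^2 / w = (w - z) * (a^2 - z * w) / (z * w)"
    using assms by (simp add: field_simps power2_eq_square)
  moreover have "z * w \<le> a^2" using assms by (simp add: power2_eq_square mult_mono)
  then have "0 \<le> (w - z) * (a^2 - z * w) / (z * w)"
    using assms by (intro divide_nonneg_pos mult_nonneg_nonneg) auto
  ultimately show ?thesis by linarith
qed

lemma square_diff_lt_of_div_lt:
  fixes z a q :: real
  assumes "0 < z" "0 \<le> a" "(z - a)^2 / z < q" "q \<le> 1"
  shows "(z - a)^2 < (2 * a + 1) * q"
proof -
  have "z \<le> (z - a)^2 / z + 2 * a"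
    using assms(1) by (simp add: field_simps power2_eq_square)
  then have "z \<le> 2 * a + 1" using assms by linarith
  then have "z * ((z - a)^2 / z) \<le> (2 * a + 1) * ((z - a)^2 / z)"
    using assms(1) by (intro mult_right_mono) auto
  moreover have "(z - a)^2 = z * ((z - a)^2 / z)" using assms(1) by simp
  ultimately have "(z - a)^2 \<le> (2 * a + 1) * ((z - a)^2 / z)" by simp
  also have "\<dots> < (2 * a + 1) * q" using assms by (intro mult_strict_left_mono) auto
  finally show ?thesis .
qed

section \<open>The trap and the Lyapunov function\<close>

text \<open>The data of the trapping argument for a fixed \<open>\<epsilon>\<close>: \<open>us\<close> and \<open>vs\<close> are the coordinates of
  \<open>E\<^sub>*\<close>, and the hypotheses on \<open>phi\<close> are all that is used of the fold condition \<open>u\<^sub>M < u\<^sup>*\<close>.\<close>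
locale trapped_system =
  fixes \<delta> \<theta> \<eta> \<epsilon> us c u2 h :: real
  assumes \<delta>: "0 < \<delta>" "\<delta> < 1" and \<theta>: "0 < \<theta>" and \<eta>: "0 < \<eta>" and \<epsilon>: "0 < \<epsilon>"
    and us: "0 < us" "us < 1" "us^2 * (1 - \<delta>) = \<delta> * \<eta>"
    and levels: "0 < c" "c < u2" "u2 < us"
    and phi_above: "\<And>u. c \<le> u \<Longrightarrow> u < us \<Longrightarrow> phi \<theta> \<eta> us < phi \<theta> \<eta> u"
    and phi_below: "\<And>u. us < u \<Longrightarrow> phi \<theta> \<eta> u < phi \<theta> \<eta> us"
    and phi_right_of_u2: "\<And>u. u2 \<le> u \<Longrightarrow> u \<le> 2 \<Longrightarrow> phi \<theta> \<eta> u \<le> phi \<theta> \<eta> u2"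
    and h: "phi \<theta> \<eta> us < h" "phi \<theta> \<eta> u2 < h" "h < phi \<theta> \<eta> c"
    and \<epsilon>_small: "16 * \<epsilon> * h * (2 - u2) < u2^2 * (h - phi \<theta> \<eta> u2)^2"
begin

abbreviation vs :: real where "vs \<equiv> phi \<theta> \<eta> us"

lemma vs_pos: "0 < vs"
  using phi_pos[OF us(1,2) \<theta> \<eta>] .

lemma h_pos: "0 < h"
  using vs_pos h(1) by linarith

definition slope :: real where
  "slope = (h - phi \<theta> \<eta> u2) / (2 * (2 - u2))"

lemma slope_pos: "0 < slope"
  using h(2) levels us(2) by (simp add: slope_def)

lemma slope_times_width: "slope * (2 - u2) = (h - phi \<theta> \<eta> u2) / 2"
proof -
  have "2 - u2 \<noteq> 0" using levels us(2) by simp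
  then show ?thesis by (simp add: slope_def field_simps)
qed

definition trap :: "(real \<times> real) set" where
  "trap = {(u, v). c \<le> u \<and> u \<le> 2 \<and> 0 < v \<and> v \<le> h \<and> v + slope * (u - u2) \<le> h}"

lemma vfield_pos_eq:
  "0 < u \<Longrightarrow> vfield \<delta> \<theta> \<eta> \<epsilon> (u, v) = (u^2 * (phi \<theta> \<eta> u - v), \<epsilon> * (1 - \<delta>) * v * (u^2 - us^2))"
proof -
  have "\<delta> * \<eta> = (1 - \<delta>) * us^2" using us(3) by (simp add: mult.commute)
  then have "(1 - \<delta>) * u^2 - \<delta> * \<eta> = (1 - \<delta>) * (u^2 - us^2)" by (simp add: right_diff_distrib)
  then show "0 < u \<Longrightarrow> ?thesis" by (simp add: vfield_eq)
qed

lemma vfield_equilibrium: "vfield \<delta> \<theta> \<eta> \<epsilon> (us, vs) = (0, 0)"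
  using vfield_pos_eq[OF us(1)] by simp

lemma lyapunov_rate_nonpos: "c \<le> u \<Longrightarrow> (u^2 - us^2) * (phi \<theta> \<eta> u - vs) \<le> 0"
proof (cases u us rule: linorder_cases)
  case less
  assume "c \<le> u"
  then have "u^2 < us^2" using less levels by (intro power_strict_mono) auto
  then show ?thesis using phi_above[OF \<open>c \<le> u\<close> less] by (simp add: mult_nonpos_nonneg)
next
  case greater
  then have "us^2 < u^2" using us by (intro power_strict_mono) auto
  then show ?thesis using phi_below[OF greater] by (simp add: mult_nonneg_nonpos)
qed simp

definition lyapunov :: "real \<times> real \<Rightarrow> real" where
  "lyapunov p = \<epsilon> * (1 - \<delta>) * (fst p - us)^2 / fst p + volterra vs (snd p)"

lemma lyapunov_equilibrium: "lyapunov (us, vs) = 0"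
  using us(1) vs_pos by (simp add: lyapunov_def volterra_self)

lemma isCont_lyapunov: "isCont lyapunov (us, vs)"
  unfolding lyapunov_def[abs_def] volterra_def using us(1) vs_pos
  by (intro continuous_intros) auto

lemma lyapunov_nonneg: "0 < u \<Longrightarrow> 0 < v \<Longrightarrow> 0 \<le> lyapunov (u, v)"
  using volterra_nonneg[OF vs_pos, of v] \<epsilon> \<delta> by (simp add: lyapunov_def)

lemma lyapunov_lt_imp_gt_c:
  assumes "0 < u" "0 < v" "lyapunov (u, v) < \<epsilon> * (1 - \<delta>) * ((c - us)^2 / c)"
  shows "c < u"
proof (rule ccontr)
  assume "\<not> c < u"
  then have "(c - us)^2 / c \<le> (u - us)^2 / u"
    using square_diff_div_antimono[OF assms(1), of c us] levels by simp
  then have "\<epsilon> * (1 - \<delta>) * ((c - us)^2 / c) \<le> \<epsilon> * (1 - \<delta>) * ((u - us)^2 / u)"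
    using \<epsilon> \<delta> by (intro mult_left_mono) auto
  also have "\<dots> \<le> lyapunov (u, v)"
    using volterra_nonneg[OF vs_pos assms(2)] by (simp add: lyapunov_def)
  finally show False using assms(3) by simp
qed

lemma lyapunov_small_imp_close:
  assumes "0 < e"
  obtains V where "0 < V" "\<And>u v. 0 < u \<Longrightarrow> 0 < v \<Longrightarrow> lyapunov (u, v) < V \<Longrightarrow> dist (u, v) (us, vs) < e"
proof -
  define k where "k = \<epsilon> * (1 - \<delta>)"
  define qu where "qu = min 1 (e^2 / (2 * (2 * us + 1)))"
  define sv where "sv = 2 * sqrt vs + 1"
  define qv where "qv = min 1 (e^2 / (2 * sv^2))"
  have k: "0 < k" using \<epsilon> \<delta> by (simp add: k_def)
  have "0 < 2 * us + 1" using us(1) by simp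
  then have "(2 * us + 1) * qu \<le> (2 * us + 1) * (e^2 / (2 * (2 * us + 1)))"
    by (intro mult_left_mono) (auto simp: qu_def)
  also have "\<dots> = e^2 / 2" using \<open>0 < 2 * us + 1\<close> by (simp add: field_simps)
  finally have qu: "0 < qu" "qu \<le> 1" "(2 * us + 1) * qu \<le> e^2 / 2"
    using assms us(1) by (auto simp: qu_def)
  have "0 < sv" unfolding sv_def using real_sqrt_gt_zero[OF vs_pos] by linarith
  then have "qv * sv^2 \<le> (e^2 / (2 * sv^2)) * sv^2"
    by (intro mult_right_mono) (auto simp: qv_def)
  also have "\<dots> = e^2 / 2" using \<open>0 < sv\<close> by (simp add: field_simps)
  finally have qv: "0 < qv" "qv \<le> 1" "qv * sv^2 \<le> e^2 / 2"
    using assms \<open>0 < sv\<close> by (auto simp: qv_def)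
  have "dist (u, v) (us, vs) < e" if uv: "0 < u" "0 < v" "lyapunov (u, v) < min (k * qu) qv" for u v
  proof -
    have L: "lyapunov (u, v) = k * ((u - us)^2 / u) + volterra vs v"
      by (simp add: lyapunov_def k_def)
    have "k * ((u - us)^2 / u) < k * qu"
      using L volterra_nonneg[OF vs_pos uv(2)] uv(3) by simp
    then have "(u - us)^2 / u < qu" using k by (simp only: mult_less_cancel_left_pos)
    then have "(u - us)^2 < (2 * us + 1) * qu"
      using us(1) qu(2) by (intro square_diff_lt_of_div_lt[OF uv(1)]) auto
    moreover have "0 \<le> k * ((u - us)^2 / u)" using uv(1) k by simp
    then have "volterra vs v < qv" using L uv(3) by simp
    then have "(v - vs)^2 < qv * sv^2"
      unfolding sv_def by (intro square_diff_lt_of_volterra_lt[OF vs_pos uv(2) _ qv(2)])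
    ultimately have "(dist (u, v) (us, vs))^2 < e^2"
      using qu(3) qv(3) by (simp add: dist_Pair_Pair dist_real_def)
    then show ?thesis using assms by (simp add: power_less_imp_less_base)
  qed
  moreover have "0 < min (k * qu) qv" using k qu qv by simp
  ultimately show ?thesis using that by blast
qed

lemma vfield_bounded_on_trap:
  obtains M where "0 < M" "\<And>p. p \<in> trap \<Longrightarrow> norm (vfield \<delta> \<theta> \<eta> \<epsilon> p) \<le> M"
proof -
  have "continuous_on (cbox (c, 0) (2, h)) (vfield \<delta> \<theta> \<eta> \<epsilon>)"
    unfolding vfield_def by (intro continuous_intros)
  then obtain B where "0 \<le> B" "\<And>p. p \<in> cbox (c, 0) (2, h) \<Longrightarrow> norm (vfield \<delta> \<theta> \<eta> \<epsilon> p) \<le> B"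
    using continuous_on_compact_bound[OF compact_cbox] by blast
  moreover have "trap \<subseteq> cbox (c, 0) (2, h)"
    by (auto simp: trap_def cbox_Pair_eq)
  ultimately show ?thesis
    using that[of "B + 1"] by force
qed

lemma rate_bounded_away_from_us:
  assumes "0 < r"
  obtains w where "0 < w"
    "\<And>y. c \<le> y \<Longrightarrow> y \<le> 2 \<Longrightarrow> r \<le> \<bar>y - us\<bar> \<Longrightarrow> w \<le> (us^2 - y^2) * (phi \<theta> \<eta> y - vs)"
proof -
  define K where "K = {c..us - r} \<union> {us + r..2}"
  have "compact K" by (simp add: K_def compact_Un)
  moreover have "continuous_on K (\<lambda>y. (us^2 - y^2) * (phi \<theta> \<eta> y - vs))"
    using levels assms by (intro continuous_intros continuous_on_phi) (auto simp: K_def)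
  moreover have "0 < (us^2 - y^2) * (phi \<theta> \<eta> y - vs)" if "y \<in> K" for y
  proof (cases "y < us")
    case True
    then have "y^2 < us^2" "c \<le> y" using that levels assms by (auto simp: K_def intro!: power_strict_mono)
    then show ?thesis using phi_above[OF \<open>c \<le> y\<close> True] by simp
  next
    case False
    then have "us < y" using that assms by (auto simp: K_def)
    then have "us^2 < y^2" using us(1) by (intro power_strict_mono) auto
    then show ?thesis using phi_below[OF \<open>us < y\<close>] by (simp add: mult_neg_neg)
  qed
  ultimately obtain w where "0 < w" "\<And>y. y \<in> K \<Longrightarrow> w \<le> (us^2 - y^2) * (phi \<theta> \<eta> y - vs)"
    using compact_pos_lower_bound by blast
  moreover have "y \<in> K" if "c \<le> y" "y \<le> 2" "r \<le> \<bar>y - us\<bar>" for y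
    using that unfolding K_def by (cases "y \<le> us") auto
  ultimately show ?thesis using that by blast
qed

lemma u_rate_beyond_slanted_edge:
  assumes "u2 \<le> u" "u \<le> 2" "h \<le> v + slope * (u - u2)"
  shows "u^2 * (phi \<theta> \<eta> u - v) \<le> - (u2^2 * (h - phi \<theta> \<eta> u2) / 2)"
proof -
  have "slope * (u - u2) \<le> slope * (2 - u2)"
    using slope_pos assms(2) by (intro mult_left_mono) auto
  then have "(h + phi \<theta> \<eta> u2) / 2 \<le> v" using assms(3) slope_times_width by simp
  then have "phi \<theta> \<eta> u - v \<le> - ((h - phi \<theta> \<eta> u2) / 2)"
    using phi_right_of_u2[OF assms(1,2)] by (simp add: field_simps)
  then have "u^2 * (phi \<theta> \<eta> u - v) \<le> u^2 * (- ((h - phi \<theta> \<eta> u2) / 2))"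
    by (intro mult_left_mono) auto
  also have "\<dots> \<le> u2^2 * (- ((h - phi \<theta> \<eta> u2) / 2))"
    using h(2) assms(1) levels by (intro mult_right_mono_neg power_mono) auto
  finally show ?thesis by simp
qed

text \<open>This is where the smallness of \<open>\<epsilon>\<close> enters: on the slanted edge the slow drift of \<open>v\<close>
  is dominated by the fast decrease of \<open>u\<close>.\<close>
lemma slanted_edge_inward:
  assumes "u2 \<le> u" "u \<le> 2" "0 < v" "v \<le> h" "v + slope * (u - u2) = h"
  shows "\<epsilon> * (1 - \<delta>) * v * (u^2 - us^2) + slope * (u^2 * (phi \<theta> \<eta> u - v)) < 0"
proof -
  have "0 < u" using assms(1) levels by simp
  have "(1 - \<delta>) * (u^2 - us^2) = u^2 - \<delta> * u^2 - (1 - \<delta>) * us^2"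
    by (simp add: algebra_simps)
  moreover have "0 \<le> \<delta> * u^2" "0 \<le> (1 - \<delta>) * us^2" using \<delta> by simp_all
  ultimately have "(1 - \<delta>) * (u^2 - us^2) \<le> u^2" by linarith
  also have "\<dots> \<le> 4" using power_mono[OF assms(2), of 2] \<open>0 < u\<close> by simp
  finally have "\<epsilon> * v * ((1 - \<delta>) * (u^2 - us^2)) \<le> \<epsilon> * v * 4"
    using \<epsilon> assms(3) by (intro mult_left_mono) auto
  also have "\<dots> \<le> \<epsilon> * h * 4" using \<epsilon> assms(4) by simp
  finally have drift: "\<epsilon> * (1 - \<delta>) * v * (u^2 - us^2) \<le> 4 * \<epsilon> * h"
    by (simp add: algebra_simps)
  have "slope * (u^2 * (phi \<theta> \<eta> u - v)) \<le> slope * (- (u2^2 * (h - phi \<theta> \<eta> u2) / 2))"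
    using u_rate_beyond_slanted_edge[OF assms(1,2)] assms(5) slope_pos by (intro mult_left_mono) auto
  also have "\<dots> = - (u2^2 * (h - phi \<theta> \<eta> u2)^2 / (4 * (2 - u2)))"
    using levels us(2) by (simp add: slope_def power2_eq_square)
  also have "\<dots> < - (4 * \<epsilon> * h)"
    using \<epsilon>_small levels us(2) by (simp add: field_simps)
  finally show ?thesis using drift by linarith
qed

lemma trap_edges_inward:
  assumes "(u, v) \<in> trap"
  shows "u = 2 \<Longrightarrow> u^2 * (phi \<theta> \<eta> u - v) < 0"
    and "u = c \<Longrightarrow> 0 < u^2 * (phi \<theta> \<eta> u - v)"
    and "v = h \<Longrightarrow> \<epsilon> * (1 - \<delta>) * v * (u^2 - us^2) < 0"
    and "v + slope * (u - u2) = h \<Longrightarrow>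
      \<epsilon> * (1 - \<delta>) * v * (u^2 - us^2) + slope * (u^2 * (phi \<theta> \<eta> u - v)) < 0"
proof -
  have box: "c \<le> u" "u \<le> 2" "0 < v" "v \<le> h" "v + slope * (u - u2) \<le> h"
    using assms by (auto simp: trap_def)
  show "u = 2 \<Longrightarrow> u^2 * (phi \<theta> \<eta> u - v) < 0"
    using phi_neg[of 2 \<theta> \<eta>] \<theta> \<eta> box(3) by simp
  show "u = c \<Longrightarrow> 0 < u^2 * (phi \<theta> \<eta> u - v)"
    using h(3) box(4) levels by simp
  show "\<epsilon> * (1 - \<delta>) * v * (u^2 - us^2) < 0" if "v = h"
  proof -
    have "u \<le> u2" using that box(5) slope_pos by (simp add: mult_le_0_iff)
    then have "u^2 < us^2" using box(1) levels by (intro power_strict_mono) auto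
    then show ?thesis using box(3) \<epsilon> \<delta> by (simp add: mult_pos_neg)
  qed
  show "\<epsilon> * (1 - \<delta>) * v * (u^2 - us^2) + slope * (u^2 * (phi \<theta> \<eta> u - v)) < 0"
    if "v + slope * (u - u2) = h"
  proof -
    have "0 \<le> slope * (u - u2)" using that box(4) by simp
    then have "u2 \<le> u" using slope_pos by (simp add: zero_le_mult_iff)
    then show ?thesis using slanted_edge_inward that box by simp
  qed
qed

end

section \<open>Behaviour of trajectories\<close>

locale trapped_solution = trapped_system +
  fixes x :: "real \<Rightarrow> real \<times> real"
  assumes sol: "is_solution \<delta> \<theta> \<eta> \<epsilon> x" and start: "0 < fst (x 0)" "0 < snd (x 0)"
begin

abbreviation u :: "real \<Rightarrow> real" where "u t \<equiv> fst (x t)"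
abbreviation v :: "real \<Rightarrow> real" where "v t \<equiv> snd (x t)"

lemma positive: "0 \<le> t \<Longrightarrow> 0 < u t" "0 \<le> t \<Longrightarrow> 0 < v t"
  using is_solution_positive[OF sol start] by auto

lemma vfield_along:
  "0 \<le> t \<Longrightarrow> vfield \<delta> \<theta> \<eta> \<epsilon> (x t) = ((u t)^2 * (phi \<theta> \<eta> (u t) - v t), \<epsilon> * (1 - \<delta>) * v t * ((u t)^2 - us^2))"
  using vfield_pos_eq[OF positive(1), of t "v t"] by simp

lemma u_DERIV:
  "0 \<le> t \<Longrightarrow> (u has_real_derivative (u t)^2 * (phi \<theta> \<eta> (u t) - v t)) (at t within {0..})"
  using is_solution_DERIV(1)[OF sol, of t] vfield_along[of t] by simp

lemma v_DERIV:
  "0 \<le> t \<Longrightarrow> (v has_real_derivative \<epsilon> * (1 - \<delta>) * v t * ((u t)^2 - us^2)) (at t within {0..})"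
  using is_solution_DERIV(2)[OF sol, of t] vfield_along[of t] by simp

lemma lyapunov_DERIV:
  assumes "0 \<le> t"
  shows "((\<lambda>t. lyapunov (x t)) has_real_derivative
    \<epsilon> * (1 - \<delta>) * (((u t)^2 - us^2) * (phi \<theta> \<eta> (u t) - vs))) (at t within {0..})"
proof -
  have "0 < u t" "0 < v t" "0 < vs" using positive[OF assms] vs_pos by auto
  then show ?thesis
    unfolding lyapunov_def volterra_def
    by (auto intro!: derivative_eq_intros u_DERIV[OF assms] v_DERIV[OF assms] simp: field_simps power2_eq_square)
qed

lemma lyapunov_nonincreasing_below_threshold:
  assumes "lyapunov (x 0) < \<epsilon> * (1 - \<delta>) * ((c - us)^2 / c)" "0 \<le> t"
  shows "lyapunov (x t) \<le> lyapunov (x 0)"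
proof (rule sublevel_forward_invariant[OF lyapunov_DERIV _ assms(1) _ assms(2)])
  fix s :: real assume "0 < s" "lyapunov (x s) < \<epsilon> * (1 - \<delta>) * ((c - us)^2 / c)"
  then have "c \<le> u s" using lyapunov_lt_imp_gt_c[of "u s" "v s"] positive[of s] by simp
  then show "\<epsilon> * (1 - \<delta>) * (((u s)^2 - us^2) * (phi \<theta> \<eta> (u s) - vs)) \<le> 0"
    using lyapunov_rate_nonpos \<epsilon> \<delta> by (simp add: mult_nonneg_nonpos)
qed auto

lemma eventually_u_le_2: "\<exists>t1\<ge>0. \<forall>t\<ge>t1. u t \<le> 2"
proof -
  have "\<exists>t1\<ge>0. u t1 \<le> 2"
  proof (rule ccontr)
    assume "\<not> ?thesis"
    then have big: "2 < u t" if "0 \<le> t" for t using that by force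
    have "u (u 0) \<le> u 0 + (-1) * (u 0 - 0)"
    proof (rule increment_le_of_DERIV_le[OF u_DERIV])
      fix t assume "0 < t" "t < u 0"
      then have "(u t)^2 * phi \<theta> \<eta> (u t) \<le> -1" "0 \<le> (u t)^2 * v t"
        using phi_times_square_le[of "u t"] big[of t] positive[of t] \<theta> \<eta> by simp_all
      then show "(u t)^2 * (phi \<theta> \<eta> (u t) - v t) \<le> -1"
        unfolding right_diff_distrib by linarith
    qed (use start in auto)
    then show False using big[of "u 0"] start by simp
  qed
  then obtain t1 where t1: "0 \<le> t1" "u t1 \<le> 2" by blast
  have "u t \<le> 2" if "t1 \<le> t" for t
  proof (rule forward_invariant_le[OF u_DERIV t1 _ that])
    fix s assume "t1 \<le> s" "u s = 2"
    then show "(u s)^2 * (phi \<theta> \<eta> (u s) - v s) < 0"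
      using phi_neg[of 2 \<theta> \<eta>] \<theta> \<eta> positive[of s] t1 by simp
  qed
  then show ?thesis using t1 by blast
qed

text \<open>Each edge of the trap is a pair (constraint \<open>\<le> 0\<close>, its derivative along \<open>x\<close>).\<close>
lemma trap_forward_invariant:
  assumes "0 \<le> t0" "x t0 \<in> trap" "t0 \<le> t"
  shows "x t \<in> trap"
proof -
  define du where "du t = (u t)^2 * (phi \<theta> \<eta> (u t) - v t)" for t
  define dv where "dv t = \<epsilon> * (1 - \<delta>) * v t * ((u t)^2 - us^2)" for t
  define edges :: "((real \<Rightarrow> real) \<times> (real \<Rightarrow> real)) set" where
    "edges = {(\<lambda>t. u t - 2, du), (\<lambda>t. c - u t, \<lambda>t. - du t), (\<lambda>t. v t - h, dv),
              (\<lambda>t. v t + slope * (u t - u2) - h, \<lambda>t. dv t + slope * du t)}"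
  have in_trap: "x s \<in> trap \<longleftrightarrow> (\<forall>e\<in>edges. fst e s \<le> 0)" if "0 \<le> s" for s
    using positive[OF that] by (auto simp: trap_def edges_def case_prod_beta)
  have "\<forall>e\<in>edges. fst e t \<le> 0"
  proof (rule finite_constraints_forward_invariant[where g = fst and g' = snd])
    fix e and s :: real assume "e \<in> edges" "0 \<le> s"
    then show "(fst e has_real_derivative snd e s) (at s within {0..})"
      using u_DERIV[of s] v_DERIV[of s] unfolding edges_def du_def dv_def
      by (auto intro!: derivative_eq_intros)
  next
    fix e and s :: real assume e: "e \<in> edges" and s: "t0 \<le> s" "\<forall>e\<in>edges. fst e s \<le> 0" and edge: "fst e s = 0"
    have "(u s, v s) \<in> trap" using in_trap s assms(1) by simp
    note inward = trap_edges_inward[OF this]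
    from e show "snd e s < 0"
      unfolding edges_def using edge inward by (auto simp: du_def dv_def)
  qed (use assms in_trap in \<open>auto simp: edges_def\<close>)
  then show ?thesis using in_trap assms by simp
qed

lemma stays_left_of_u2:
  assumes outside: "\<And>t. s \<le> t \<Longrightarrow> x t \<notin> trap" and "0 \<le> s" "u s \<le> u2" "s \<le> t"
  shows "u t \<le> u2"
proof (rule forward_invariant_le[OF u_DERIV \<open>0 \<le> s\<close> \<open>u s \<le> u2\<close> _ \<open>s \<le> t\<close>])
  fix r assume r: "s \<le> r" "u r = u2"
  then have "h < v r"
    using outside[OF r(1)] positive[of r] levels us(2) \<open>0 \<le> s\<close> by (auto simp: trap_def)
  then show "(u r)^2 * (phi \<theta> \<eta> (u r) - v r) < 0"
    using r(2) h(2) levels by (simp add: mult_pos_neg)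
qed

lemma v_vanishes_left_of_u2:
  assumes "0 \<le> s" and left: "\<And>t. s \<le> t \<Longrightarrow> u t \<le> u2" and "0 < m"
  shows "\<exists>s'\<ge>s. \<forall>t\<ge>s'. v t < m"
proof -
  define k where "k = \<epsilon> * (1 - \<delta>) * (us^2 - u2^2)"
  have "u2^2 < us^2" using levels by (intro power_strict_mono) auto
  then have "0 < k" using \<epsilon> \<delta> by (simp add: k_def)
  have ln_v: "((\<lambda>t. ln (v t)) has_real_derivative \<epsilon> * (1 - \<delta>) * ((u t)^2 - us^2)) (at t within {0..})"
    if "0 \<le> t" for t
    using v_DERIV[OF that] positive[OF that] by (auto intro!: derivative_eq_intros simp: field_simps)
  define s' where "s' = s + (\<bar>ln (v s) - ln m\<bar> + 1) / k"
  have "s \<le> s'" using \<open>0 < k\<close> by (simp add: s'_def)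
  moreover have "v t < m" if "s' \<le> t" for t
  proof -
    have "s \<le> t" using that \<open>s \<le> s'\<close> by simp
    have "ln (v t) \<le> ln (v s) + (- k) * (t - s)"
    proof (rule increment_le_of_DERIV_le[OF ln_v \<open>0 \<le> s\<close> \<open>s \<le> t\<close>])
      fix r assume "s < r" "r < t"
      then have "(u r)^2 \<le> u2^2" using left[of r] positive[of r] \<open>0 \<le> s\<close> by (intro power_mono) auto
      then have "\<epsilon> * (1 - \<delta>) * ((u r)^2 - us^2) \<le> \<epsilon> * (1 - \<delta>) * (u2^2 - us^2)"
        using \<epsilon> \<delta> by (intro mult_left_mono) auto
      then show "\<epsilon> * (1 - \<delta>) * ((u r)^2 - us^2) \<le> - k"
        by (simp add: k_def algebra_simps)
    qed
    moreover have "\<bar>ln (v s) - ln m\<bar> + 1 \<le> k * (t - s)"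
      using that \<open>0 < k\<close> by (simp add: s'_def field_simps)
    ultimately have "ln (v t) < ln m" by linarith
    then show ?thesis using positive[of t] \<open>0 \<le> s\<close> \<open>s \<le> t\<close> \<open>0 < m\<close> by simp
  qed
  ultimately show ?thesis by blast
qed

text \<open>Left of \<open>u2\<close> the predator \<open>v\<close> dies out, so \<open>u\<close> grows like the solution of
  \<open>u' = (L/2) u\<^sup>2\<close> and must cross \<open>u = c\<close> into the trap.\<close>
lemma not_forever_left_of_u2:
  assumes outside: "\<And>t. s \<le> t \<Longrightarrow> x t \<notin> trap" and "0 \<le> s" and left: "\<And>t. s \<le> t \<Longrightarrow> u t \<le> u2"
  shows False
proof -
  define L where "L = (1 - u2) * \<theta> * \<eta> / u2"
  have "0 < L" using levels us(2) \<theta> \<eta> by (simp add: L_def)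
  obtain s' where "s \<le> s'" and small: "\<And>t. s' \<le> t \<Longrightarrow> v t < min h (L / 2)"
    using v_vanishes_left_of_u2[OF \<open>0 \<le> s\<close> left, of "min h (L / 2)"] h_pos \<open>0 < L\<close> by auto
  have below_c: "u t < c" if "s' \<le> t" for t
  proof (rule ccontr)
    assume "\<not> u t < c"
    moreover have "u t \<le> u2" "0 < v t" "v t < h"
      using left[of t] positive[of t] small[OF that] that \<open>s \<le> s'\<close> \<open>0 \<le> s\<close> by auto
    moreover have "slope * (u t - u2) \<le> 0"
      using \<open>u t \<le> u2\<close> slope_pos by (simp add: mult_nonneg_nonpos)
    ultimately have "x t \<in> trap" using levels us(2) by (auto simp: trap_def case_prod_beta)
    then show False using outside[of t] that \<open>s \<le> s'\<close> by simp
  qed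
  have "0 \<le> s'" using \<open>0 \<le> s\<close> \<open>s \<le> s'\<close> by simp
  have rate: "L / 2 * (u t)^2 \<le> (u t)^2 * (phi \<theta> \<eta> (u t) - v t)" if "s' < t" for t
  proof -
    have "L \<le> phi \<theta> \<eta> (u t)"
      unfolding L_def using below_c[of t] positive[of t] that \<open>0 \<le> s'\<close> levels us(2) \<theta> \<eta>
      by (intro phi_lower_bound) auto
    then have "L / 2 \<le> phi \<theta> \<eta> (u t) - v t" using small[of t] that by simp
    then have "L / 2 * (u t)^2 \<le> (phi \<theta> \<eta> (u t) - v t) * (u t)^2" by (rule mult_right_mono) simp
    then show ?thesis by (simp only: mult.commute)
  qed
  define \<tau> where "\<tau> = c / (L / 2 * (u s')^2)"
  have "u s' + c \<le> u (s' + \<tau>)" unfolding \<tau>_def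
    using \<open>0 < L\<close> levels positive[OF \<open>0 \<le> s'\<close>] rate
    by (intro increment_ge_of_DERIV_ge_square[OF u_DERIV \<open>0 \<le> s'\<close>]) auto
  moreover have "0 \<le> \<tau>" using \<open>0 < L\<close> levels by (simp add: \<tau>_def)
  ultimately show False
    using below_c[of "s' + \<tau>"] positive[OF \<open>0 \<le> s'\<close>] by simp
qed

text \<open>Right of \<open>u2\<close> and outside the trap, the state lies above the slanted edge, where \<open>u\<close>
  decreases at a definite rate.\<close>
lemma not_forever_right_of_u2:
  assumes outside: "\<And>t. s \<le> t \<Longrightarrow> x t \<notin> trap" and "0 \<le> s"
    and right: "\<And>t. s \<le> t \<Longrightarrow> u2 < u t \<and> u t \<le> 2"
  shows False
proof -
  define r where "r = u2^2 * (h - phi \<theta> \<eta> u2) / 2"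
  have "0 < r" using levels h(2) by (simp add: r_def)
  have rate: "(u t)^2 * (phi \<theta> \<eta> (u t) - v t) \<le> - r" if "s \<le> t" for t
  proof -
    have "0 < v t" using positive[of t] that \<open>0 \<le> s\<close> by simp
    moreover have "0 < slope * (u t - u2)" using right[OF that] slope_pos by simp
    ultimately have "h \<le> v t + slope * (u t - u2)"
      using outside[OF that] right[OF that] levels by (auto simp: trap_def case_prod_beta)
    then show ?thesis
      using u_rate_beyond_slanted_edge[of "u t" "v t"] right[OF that] by (simp add: r_def)
  qed
  have "u (s + 2 / r) \<le> u s + (- r) * ((s + 2 / r) - s)"
    by (rule increment_le_of_DERIV_le[OF u_DERIV \<open>0 \<le> s\<close>]) (use rate \<open>0 < r\<close> in auto)
  then have "u (s + 2 / r) \<le> u s - 2" using \<open>0 < r\<close> by simp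
  then show False using right[of s] right[of "s + 2 / r"] levels \<open>0 < r\<close> by simp
qed

lemma enters_trap: "\<exists>t0\<ge>0. x t0 \<in> trap"
proof (rule ccontr)
  assume "\<not> ?thesis"
  then have outside: "x t \<notin> trap" if "0 \<le> t" for t using that by blast
  obtain t1 where "0 \<le> t1" and le_2: "\<And>t. t1 \<le> t \<Longrightarrow> u t \<le> 2"
    using eventually_u_le_2 by blast
  show False
  proof (cases "\<exists>s\<ge>t1. u s \<le> u2")
    case True
    then obtain s where "t1 \<le> s" "u s \<le> u2" by blast
    then have "0 \<le> s" using \<open>0 \<le> t1\<close> by simp
    then have "u t \<le> u2" if "s \<le> t" for t
      using stays_left_of_u2[of s] outside that \<open>0 \<le> s\<close> \<open>u s \<le> u2\<close> by simp
    then show False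
      using not_forever_left_of_u2[of s] outside \<open>0 \<le> s\<close> by simp
  next
    case False
    then have "u2 < u t \<and> u t \<le> 2" if "t1 \<le> t" for t
      using le_2 that by force
    then show False
      using not_forever_right_of_u2[of t1] outside \<open>0 \<le> t1\<close> by simp
  qed
qed

lemma lipschitz_after_trapping:
  assumes "0 \<le> t0" and trapped: "\<And>t. t0 \<le> t \<Longrightarrow> x t \<in> trap"
  obtains M where "0 < M" "\<And>a b. t0 \<le> a \<Longrightarrow> a \<le> b \<Longrightarrow> dist (x b) (x a) \<le> M * (b - a)"
proof -
  obtain M where "0 < M" and M: "\<And>p. p \<in> trap \<Longrightarrow> norm (vfield \<delta> \<theta> \<eta> \<epsilon> p) \<le> M"
    using vfield_bounded_on_trap by blast
  have "dist (x b) (x a) \<le> M * (b - a)" if "t0 \<le> a" "a \<le> b" for a b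
    unfolding dist_norm
    using sol \<open>0 \<le> t0\<close> that M trapped
    by (intro norm_increment_le_of_vector_derivative_le[where f' = "\<lambda>t. vfield \<delta> \<theta> \<eta> \<epsilon> (x t)"])
      (auto simp: is_solution_def)
  with \<open>0 < M\<close> show ?thesis using that by blast
qed

context
  fixes t0 M :: real
  assumes "0 \<le> t0" and trapped: "\<And>t. t0 \<le> t \<Longrightarrow> x t \<in> trap"
    and "0 < M" and lip: "\<And>a b. t0 \<le> a \<Longrightarrow> a \<le> b \<Longrightarrow> dist (x b) (x a) \<le> M * (b - a)"
begin

lemma u_lipschitz: "t0 \<le> a \<Longrightarrow> a \<le> b \<Longrightarrow> \<bar>u b - u a\<bar> \<le> M * (b - a)"
  using lip[of a b] dist_fst_le[of "x b" "x a"] by (simp add: dist_real_def)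

lemma v_lipschitz: "t0 \<le> a \<Longrightarrow> a \<le> b \<Longrightarrow> \<bar>v b - v a\<bar> \<le> M * (b - a)"
  using lip[of a b] dist_snd_le[of "x b" "x a"] by (simp add: dist_real_def)

lemma lyapunov_antimono_after_trapping:
  assumes "t0 \<le> a" "a \<le> b"
  shows "lyapunov (x b) \<le> lyapunov (x a)"
proof -
  have "lyapunov (x b) \<le> lyapunov (x a) + 0 * (b - a)"
  proof (rule increment_le_of_DERIV_le[OF lyapunov_DERIV])
    fix t assume "a < t" "t < b"
    then have "c \<le> u t" using trapped[of t] assms by (auto simp: trap_def case_prod_beta)
    then show "\<epsilon> * (1 - \<delta>) * (((u t)^2 - us^2) * (phi \<theta> \<eta> (u t) - vs)) \<le> 0"
      using lyapunov_rate_nonpos \<epsilon> \<delta> by (simp add: mult_nonneg_nonpos)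
  qed (use assms \<open>0 \<le> t0\<close> in auto)
  then show ?thesis by simp
qed

lemma lyapunov_drops_while_u_far:
  assumes "0 < r"
  obtains D \<tau> where "0 < D" "0 \<le> \<tau>"
    "\<And>t. t0 \<le> t \<Longrightarrow> r \<le> \<bar>u t - us\<bar> \<Longrightarrow> lyapunov (x (t + \<tau>)) \<le> lyapunov (x t) - D"
proof -
  obtain w where "0 < w" and w: "\<And>y. c \<le> y \<Longrightarrow> y \<le> 2 \<Longrightarrow> r / 2 \<le> \<bar>y - us\<bar> \<Longrightarrow>
      w \<le> (us^2 - y^2) * (phi \<theta> \<eta> y - vs)"
    using rate_bounded_away_from_us[of "r / 2"] \<open>0 < r\<close> by auto
  define \<tau> where "\<tau> = r / (2 * M)"
  have "0 < \<tau>" using \<open>0 < r\<close> \<open>0 < M\<close> by (simp add: \<tau>_def)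
  have "lyapunov (x (t + \<tau>)) \<le> lyapunov (x t) - \<epsilon> * (1 - \<delta>) * w * \<tau>"
    if "t0 \<le> t" "r \<le> \<bar>u t - us\<bar>" for t
  proof -
    have "lyapunov (x (t + \<tau>)) \<le> lyapunov (x t) + (- (\<epsilon> * (1 - \<delta>) * w)) * ((t + \<tau>) - t)"
    proof (rule increment_le_of_DERIV_le[OF lyapunov_DERIV])
      fix s assume s: "t < s" "s < t + \<tau>"
      have "\<bar>u s - u t\<bar> \<le> M * (s - t)" using u_lipschitz[of t s] that s by simp
      also have "\<dots> \<le> M * \<tau>" using s \<open>0 < M\<close> by simp
      finally have "\<bar>u s - u t\<bar> \<le> r / 2" using \<open>0 < M\<close> by (simp add: \<tau>_def)
      then have "r / 2 \<le> \<bar>u s - us\<bar>" using that(2) by arith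
      moreover have "c \<le> u s" "u s \<le> 2"
        using trapped[of s] that s by (auto simp: trap_def case_prod_beta)
      ultimately have "\<epsilon> * (1 - \<delta>) * w \<le> \<epsilon> * (1 - \<delta>) * ((us^2 - (u s)^2) * (phi \<theta> \<eta> (u s) - vs))"
        using w \<epsilon> \<delta> by (intro mult_left_mono) auto
      then show "\<epsilon> * (1 - \<delta>) * (((u s)^2 - us^2) * (phi \<theta> \<eta> (u s) - vs)) \<le> - (\<epsilon> * (1 - \<delta>) * w)"
        by (simp add: algebra_simps)
    qed (use that \<open>0 \<le> t0\<close> \<open>0 < \<tau>\<close> in auto)
    then show ?thesis by simp
  qed
  moreover have "0 < \<epsilon> * (1 - \<delta>) * w * \<tau>" using \<epsilon> \<delta> \<open>0 < w\<close> \<open>0 < \<tau>\<close> by simp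
  ultimately show ?thesis using that \<open>0 < \<tau>\<close> by (meson less_imp_le)
qed

text \<open>The Lyapunov function is nonnegative, so it can drop by a fixed amount only finitely often.\<close>
lemma u_tendsto: "(u \<longlongrightarrow> us) at_top"
proof -
  have "\<exists>N. \<forall>t\<ge>N. \<not> r \<le> \<bar>u t - us\<bar>" if "0 < r" for r
  proof -
    obtain D \<tau> where "0 < D" "0 \<le> \<tau>"
      and drop: "\<And>t. t0 \<le> t \<Longrightarrow> r \<le> \<bar>u t - us\<bar> \<Longrightarrow> lyapunov (x (t + \<tau>)) \<le> lyapunov (x t) - D"
      using lyapunov_drops_while_u_far[OF \<open>0 < r\<close>] by blast
    have "0 \<le> lyapunov (x t)" if "t0 \<le> t" for t
      using lyapunov_nonneg[of "u t" "v t"] positive[of t] that \<open>0 \<le> t0\<close> by simp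
    then show ?thesis
      using lyapunov_antimono_after_trapping drop \<open>0 < D\<close> \<open>0 \<le> \<tau>\<close>
      by (intro eventually_not_of_drops[where W = "\<lambda>t. lyapunov (x t)" and B = 0 and T = t0
            and D = D and \<tau> = \<tau>]) auto
  qed
  then show ?thesis
    unfolding tendsto_iff dist_real_def eventually_at_top_linorder by (meson not_le)
qed

text \<open>While \<open>v\<close> stays away from \<open>vs\<close> (which it does for a while, being Lipschitz) and \<open>phi u\<close>
  stays near \<open>vs\<close>, the fast variable \<open>u\<close> moves at a definite rate, in the direction \<open>\<sigma>\<close>
  opposite to the gap \<open>v - vs\<close>.\<close>
lemma u_moves_while_v_far:
  assumes "t0 \<le> t" "0 < r" "r \<le> \<bar>v t - vs\<bar>"
    and near: "\<And>s. t < s \<Longrightarrow> \<bar>phi \<theta> \<eta> (u s) - vs\<bar> < r / 4"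
  shows "c^2 * r^2 / (8 * M) \<le> \<bar>u (t + r / (2 * M)) - u t\<bar>"
proof -
  define \<tau> where "\<tau> = r / (2 * M)"
  have "0 < \<tau>" using assms(2) \<open>0 < M\<close> by (simp add: \<tau>_def)
  define \<sigma> :: real where "\<sigma> = (if vs \<le> v t then 1 else -1)"
  have \<sigma>_gap: "\<sigma> * (v t - vs) = \<bar>v t - vs\<bar>" and \<sigma>_le: "\<And>y. \<sigma> * y \<le> \<bar>y\<bar>"
    by (auto simp: \<sigma>_def)
  have "\<sigma> * u (t + \<tau>) \<le> \<sigma> * u t + (- (c^2 * (r / 4))) * ((t + \<tau>) - t)"
  proof (rule increment_le_of_DERIV_le[where f = "\<lambda>s. \<sigma> * u s"])
    show "((\<lambda>s. \<sigma> * u s) has_real_derivative \<sigma> * ((u s)^2 * (phi \<theta> \<eta> (u s) - v s))) (at s within {0..})"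
      if "0 \<le> s" for s
      using u_DERIV[OF that] by (rule DERIV_cmult)
  next
    fix s assume s: "t < s" "s < t + \<tau>"
    have "\<bar>v s - v t\<bar> \<le> M * (s - t)" using v_lipschitz[of t s] assms(1) s by simp
    also have "\<dots> \<le> r / 2" using s \<open>0 < M\<close> by (simp add: \<tau>_def field_simps)
    finally have "\<sigma> * (v t - v s) \<le> r / 2"
      using \<sigma>_le[of "v t - v s"] by (simp add: abs_minus_commute)
    moreover have "\<sigma> * (phi \<theta> \<eta> (u s) - vs) < r / 4"
      using \<sigma>_le[of "phi \<theta> \<eta> (u s) - vs"] near[OF s(1)] by simp
    moreover have "\<sigma> * (phi \<theta> \<eta> (u s) - v s)
        = \<sigma> * (phi \<theta> \<eta> (u s) - vs) - \<sigma> * (v t - vs) + \<sigma> * (v t - v s)"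
      by (simp add: algebra_simps)
    ultimately have "\<sigma> * (phi \<theta> \<eta> (u s) - v s) \<le> - (r / 4)"
      using \<sigma>_gap assms(3) by linarith
    then have "(u s)^2 * (\<sigma> * (phi \<theta> \<eta> (u s) - v s)) \<le> (u s)^2 * (- (r / 4))"
      by (intro mult_left_mono) auto
    also have "\<dots> \<le> c^2 * (- (r / 4))"
      using trapped[of s] assms(1,2) s levels
      by (intro mult_right_mono_neg power_mono) (auto simp: trap_def case_prod_beta)
    finally show "\<sigma> * ((u s)^2 * (phi \<theta> \<eta> (u s) - v s)) \<le> - (c^2 * (r / 4))"
      by (simp add: algebra_simps)
  qed (use assms(1) \<open>0 \<le> t0\<close> \<open>0 < \<tau>\<close> in auto)
  then have "c^2 * r^2 / (8 * M) \<le> \<sigma> * (u t - u (t + \<tau>))"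
    by (simp add: \<tau>_def power2_eq_square algebra_simps)
  also have "\<dots> \<le> \<bar>u (t + \<tau>) - u t\<bar>" using \<sigma>_le[of "u t - u (t + \<tau>)"] by (simp add: abs_minus_commute)
  finally show ?thesis by (simp add: \<tau>_def)
qed

lemma v_tendsto: "(v \<longlongrightarrow> vs) at_top"
proof -
  have phi_u: "((\<lambda>t. phi \<theta> \<eta> (u t)) \<longlongrightarrow> vs) at_top"
    using isCont_tendsto_compose[OF isCont_phi u_tendsto] us(1) by simp
  have "\<exists>N. \<forall>t\<ge>N. \<not> r \<le> \<bar>v t - vs\<bar>" if "0 < r" for r
  proof (rule ccontr)
    assume "\<not> ?thesis"
    then have often: "\<exists>t\<ge>N. r \<le> \<bar>v t - vs\<bar>" for N by (meson not_le)
    define \<zeta> where "\<zeta> = c^2 * r^2 / (8 * M)"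
    have "0 < \<zeta>" using \<open>0 < r\<close> \<open>0 < M\<close> levels by (simp add: \<zeta>_def)
    have "\<forall>\<^sub>F t in at_top. \<bar>u t - us\<bar> < \<zeta> / 2 \<and> \<bar>phi \<theta> \<eta> (u t) - vs\<bar> < r / 4"
      using tendstoD[OF u_tendsto, of "\<zeta> / 2"] tendstoD[OF phi_u, of "r / 4"] \<open>0 < \<zeta>\<close> \<open>0 < r\<close>
      by (auto simp: dist_real_def intro: eventually_conj)
    then obtain N where N: "\<And>t. N \<le> t \<Longrightarrow> \<bar>u t - us\<bar> < \<zeta> / 2 \<and> \<bar>phi \<theta> \<eta> (u t) - vs\<bar> < r / 4"
      by (auto simp: eventually_at_top_linorder)
    obtain t where t: "max N t0 \<le> t" "r \<le> \<bar>v t - vs\<bar>" using often by blast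
    have "\<zeta> \<le> \<bar>u (t + r / (2 * M)) - u t\<bar>"
      unfolding \<zeta>_def using t N \<open>0 < r\<close> by (intro u_moves_while_v_far) auto
    moreover have "\<bar>u (t + r / (2 * M)) - u t\<bar> < \<zeta>"
    proof -
      have "0 < r / (2 * M)" using \<open>0 < r\<close> \<open>0 < M\<close> by simp
      then have "\<bar>u (t + r / (2 * M)) - us\<bar> < \<zeta> / 2" "\<bar>u t - us\<bar> < \<zeta> / 2"
        using N[of t] N[of "t + r / (2 * M)"] t by auto
      then show ?thesis by arith
    qed
    ultimately show False by simp
  qed
  then show ?thesis
    unfolding tendsto_iff dist_real_def eventually_at_top_linorder by (meson not_le)
qed

end

lemma tendsto_equilibrium: "(x \<longlongrightarrow> (us, vs)) at_top"
proof -
  obtain t0 where "0 \<le> t0" "x t0 \<in> trap" using enters_trap by blast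
  then have trapped: "\<And>t. t0 \<le> t \<Longrightarrow> x t \<in> trap" using trap_forward_invariant by blast
  obtain M where "0 < M" "\<And>a b. t0 \<le> a \<Longrightarrow> a \<le> b \<Longrightarrow> dist (x b) (x a) \<le> M * (b - a)"
    using lipschitz_after_trapping[OF \<open>0 \<le> t0\<close> trapped] by blast
  from tendsto_Pair[OF u_tendsto[OF \<open>0 \<le> t0\<close> trapped this] v_tendsto[OF \<open>0 \<le> t0\<close> trapped this]]
  show ?thesis by simp
qed

end

context trapped_system
begin

lemma tendsto_equilibrium_of_positive_start:
  assumes "is_solution \<delta> \<theta> \<eta> \<epsilon> x" "0 < fst (x 0)" "0 < snd (x 0)"
  shows "(x \<longlongrightarrow> (us, vs)) at_top"
proof -
  interpret trapped_solution \<delta> \<theta> \<eta> \<epsilon> us c u2 h x using assms by unfold_locales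
  show ?thesis by (rule tendsto_equilibrium)
qed

lemma lyap_stable_equilibrium: "lyap_stable \<delta> \<theta> \<eta> \<epsilon> (us, vs)"
  unfolding lyap_stable_def
proof (intro allI impI)
  fix e :: real assume "0 < e"
  obtain V0 where "0 < V0"
    and close: "\<And>u v. 0 < u \<Longrightarrow> 0 < v \<Longrightarrow> lyapunov (u, v) < V0 \<Longrightarrow> dist (u, v) (us, vs) < e"
    using lyapunov_small_imp_close[OF \<open>0 < e\<close>] by blast
  define V where "V = min V0 (\<epsilon> * (1 - \<delta>) * ((c - us)^2 / c))"
  have "0 < V" using \<open>0 < V0\<close> \<epsilon> \<delta> levels by (simp add: V_def)
  then obtain d0 where "0 < d0" and d0: "\<And>p. dist p (us, vs) < d0 \<Longrightarrow> dist (lyapunov p) (lyapunov (us, vs)) < V"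
    using isCont_lyapunov unfolding continuous_at_eps_delta by blast
  define d where "d = min d0 (min us vs)"
  have "0 < d" using \<open>0 < d0\<close> us(1) vs_pos by (simp add: d_def)
  moreover have "dist (x t) (us, vs) < e"
    if x: "is_solution \<delta> \<theta> \<eta> \<epsilon> x" "dist (x 0) (us, vs) < d" and "0 \<le> t" for x t
  proof -
    have "\<bar>fst (x 0) - us\<bar> < us" "\<bar>snd (x 0) - vs\<bar> < vs"
      using x(2) dist_fst_le[of "x 0" "(us, vs)"] dist_snd_le[of "x 0" "(us, vs)"]
      by (auto simp: d_def dist_real_def)
    then have "0 < fst (x 0)" "0 < snd (x 0)" by auto
    then interpret trapped_solution \<delta> \<theta> \<eta> \<epsilon> us c u2 h x
      using x(1) by unfold_locales
    have "lyapunov (x 0) < V"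
      using d0[of "x 0"] x(2) lyapunov_equilibrium by (simp add: d_def dist_real_def)
    then have "lyapunov (x t) < V0"
      using lyapunov_nonincreasing_below_threshold[OF _ \<open>0 \<le> t\<close>] by (simp add: V_def)
    then show ?thesis using close[of "u t" "v t"] positive[OF \<open>0 \<le> t\<close>] by simp
  qed
  ultimately show "\<exists>d>0. \<forall>x. is_solution \<delta> \<theta> \<eta> \<epsilon> x \<and> dist (x 0) (us, vs) < d
      \<longrightarrow> (\<forall>t\<ge>0. dist (x t) (us, vs) < e)"
    by blast
qed

end

lemma u_star_bounds:
  assumes "0 < \<delta>" "0 < \<eta>" "\<delta> < 1 / (1 + \<eta>)"
  shows "\<delta> < 1" "0 < u_star \<delta> \<eta>" "u_star \<delta> \<eta> < 1" "(u_star \<delta> \<eta>)^2 * (1 - \<delta>) = \<delta> * \<eta>"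
proof -
  have "\<delta> + \<delta> * \<eta> < 1" using assms by (simp add: field_simps)
  moreover have "0 < \<delta> * \<eta>" using assms by simp
  ultimately show "\<delta> < 1" by linarith
  have "\<delta> * \<eta> / (1 - \<delta>) < 1" using \<open>\<delta> + \<delta> * \<eta> < 1\<close> \<open>\<delta> < 1\<close> by (simp add: field_simps)
  then show "0 < u_star \<delta> \<eta>" "u_star \<delta> \<eta> < 1" "(u_star \<delta> \<eta>)^2 * (1 - \<delta>) = \<delta> * \<eta>"
    using assms \<open>\<delta> < 1\<close> by (simp_all add: u_star_def)
qed

lemma phi_decreasing_beyond_fold:
  assumes "0 < \<theta>" "0 < \<eta>" "fold_max \<theta> \<eta> uM" "uM \<le> p" "p < q" "p < 1"
  shows "phi \<theta> \<eta> q < phi \<theta> \<eta> p"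
proof (cases "q \<le> 1")
  case True
  then show ?thesis
    using monotone_onD[OF phi_strict_antimono_after_fold[OF assms(1-3)], of p q] assms(4-6) by simp
next
  case False
  have "0 < p" using assms(3,4) by (auto simp: fold_max_def)
  then show ?thesis using False phi_neg[of q] phi_pos[of p] assms(1,2,6) by fastforce
qed

text \<open>The levels are chosen by continuity of \<open>phi\<close> at \<open>u\<^sub>M\<close> (for \<open>c\<close>) and at \<open>us\<close> (for \<open>u2\<close>).\<close>
lemma trap_levels_exist:
  assumes "0 < \<theta>" "0 < \<eta>" and fold: "fold_max \<theta> \<eta> uM" and "uM < us" "us < 1"
  obtains c u2 h where "0 < c" "c < u2" "u2 < us"
    "\<And>u. c \<le> u \<Longrightarrow> u < us \<Longrightarrow> phi \<theta> \<eta> us < phi \<theta> \<eta> u"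
    "\<And>u. u2 \<le> u \<Longrightarrow> u \<le> 2 \<Longrightarrow> phi \<theta> \<eta> u \<le> phi \<theta> \<eta> u2"
    "phi \<theta> \<eta> us < h" "phi \<theta> \<eta> u2 < h" "h < phi \<theta> \<eta> c"
proof -
  note decr = phi_decreasing_beyond_fold[OF assms(1-3)]
  have "0 < uM" using fold by (simp add: fold_max_def)
  obtain d where "0 < d"
    and d: "\<And>y. \<bar>y - uM\<bar> < d \<Longrightarrow> \<bar>phi \<theta> \<eta> y - phi \<theta> \<eta> uM\<bar> < phi \<theta> \<eta> uM - phi \<theta> \<eta> us"
    using phi_eps_delta[OF \<open>0 < uM\<close>, of "phi \<theta> \<eta> uM - phi \<theta> \<eta> us"] decr[of uM us] assms(4,5) by auto
  define c where "c = max (uM - d / 2) (uM / 2)"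
  have c: "0 < c" "c < uM" using \<open>0 < uM\<close> \<open>0 < d\<close> by (auto simp: c_def)
  have above: "phi \<theta> \<eta> us < phi \<theta> \<eta> u" if "c \<le> u" "u < us" for u
  proof (cases "u \<le> uM")
    case True
    then have "\<bar>u - uM\<bar> < d" using that \<open>0 < d\<close> by (auto simp: c_def)
    then show ?thesis using d by fastforce
  qed (use decr[of u us] that assms(5) in auto)
  define h where "h = (phi \<theta> \<eta> c + phi \<theta> \<eta> us) / 2"
  have h: "phi \<theta> \<eta> us < h" "h < phi \<theta> \<eta> c" using above[of c] c assms(4) by (auto simp: h_def)
  have "0 < us" using \<open>0 < uM\<close> assms(4) by simp
  then obtain d' where "0 < d'"
    and d': "\<And>y. \<bar>y - us\<bar> < d' \<Longrightarrow> \<bar>phi \<theta> \<eta> y - phi \<theta> \<eta> us\<bar> < h - phi \<theta> \<eta> us"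
    using phi_eps_delta[of us "h - phi \<theta> \<eta> us"] h by auto
  define u2 where "u2 = max (us - d' / 2) ((uM + us) / 2)"
  have u2: "uM < u2" "u2 < us" using assms(4) \<open>0 < d'\<close> by (auto simp: u2_def less_max_iff_disj)
  have "\<bar>u2 - us\<bar> < d'" using u2 \<open>0 < d'\<close> by (auto simp: u2_def)
  then have "phi \<theta> \<eta> u2 < h" using d'[of u2] by (simp add: abs_less_iff)
  moreover have "phi \<theta> \<eta> u \<le> phi \<theta> \<eta> u2" if "u2 \<le> u" for u
    using decr[of u2 u] u2 assms(5) that by (cases "u = u2") auto
  moreover have "c < u2" using c u2 by simp
  ultimately show ?thesis using that[of c u2 h] c(1) u2(2) above h by blast
qed

lemma trapped_system_exists:
  assumes "0 < \<delta>" "0 < \<theta>" "0 < \<eta>" and fold: "fold_max \<theta> \<eta> uM"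
    and "\<delta> < 1 / (1 + \<eta>)" and "uM < u_star \<delta> \<eta>"
  obtains \<epsilon>0 c u2 h where "0 < \<epsilon>0"
    "\<And>\<epsilon>. 0 < \<epsilon> \<Longrightarrow> \<epsilon> < \<epsilon>0 \<Longrightarrow> trapped_system \<delta> \<theta> \<eta> \<epsilon> (u_star \<delta> \<eta>) c u2 h"
proof -
  define us where "us = u_star \<delta> \<eta>"
  note us = u_star_bounds[OF assms(1,3,5), folded us_def]
  have "uM < us" using assms(6) by (simp add: us_def)
  obtain c u2 h where levels: "0 < c" "c < u2" "u2 < us"
    and above: "\<And>u. c \<le> u \<Longrightarrow> u < us \<Longrightarrow> phi \<theta> \<eta> us < phi \<theta> \<eta> u"
    and right: "\<And>u. u2 \<le> u \<Longrightarrow> u \<le> 2 \<Longrightarrow> phi \<theta> \<eta> u \<le> phi \<theta> \<eta> u2"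
    and h: "phi \<theta> \<eta> us < h" "phi \<theta> \<eta> u2 < h" "h < phi \<theta> \<eta> c"
    using trap_levels_exist[OF assms(2,3) fold \<open>uM < us\<close> us(3)] by blast
  have below: "phi \<theta> \<eta> u < phi \<theta> \<eta> us" if "us < u" for u
    using phi_decreasing_beyond_fold[OF assms(2,3) fold, of us u] \<open>uM < us\<close> us(3) that by simp
  have "0 < h" using phi_pos[OF us(2,3) assms(2,3)] h(1) by simp
  define \<epsilon>0 where "\<epsilon>0 = u2^2 * (h - phi \<theta> \<eta> u2)^2 / (16 * h * (2 - u2))"
  show ?thesis
  proof (rule that)
    show "0 < \<epsilon>0" using \<open>0 < h\<close> h(2) levels us(3) by (simp add: \<epsilon>0_def)
  next
    fix \<epsilon> :: real assume "0 < \<epsilon>" "\<epsilon> < \<epsilon>0"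
    have "trapped_system \<delta> \<theta> \<eta> \<epsilon> us c u2 h"
    proof
      have "16 * h * (2 - u2) > 0" using \<open>0 < h\<close> levels us(3) by simp
      then show "16 * \<epsilon> * h * (2 - u2) < u2^2 * (h - phi \<theta> \<eta> u2)^2"
        using \<open>\<epsilon> < \<epsilon>0\<close> by (simp add: \<epsilon>0_def field_simps)
    qed (use assms us levels above below right h \<open>0 < \<epsilon>\<close> in auto)
    then show "trapped_system \<delta> \<theta> \<eta> \<epsilon> (u_star \<delta> \<eta>) c u2 h" by (simp add: us_def)
  qed
qed

theorem theorem6:
  fixes \<delta> \<theta> \<eta> uM :: real
  assumes "0 < \<delta>" "0 < \<theta>" "0 < \<eta>"
    and "region_R \<eta> \<theta>"
    and "fold_max \<theta> \<eta> uM"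
    and "\<delta> < 1 / (1 + \<eta>)"
    and "u_star \<delta> \<eta> > uM"
  shows "\<exists>\<epsilon>0>0. \<forall>\<epsilon>. 0 < \<epsilon> \<and> \<epsilon> < \<epsilon>0 \<longrightarrow>
           vfield \<delta> \<theta> \<eta> \<epsilon> (E_star \<delta> \<theta> \<eta>) = (0, 0)
         \<and> lyap_stable \<delta> \<theta> \<eta> \<epsilon> (E_star \<delta> \<theta> \<eta>)
         \<and> (\<forall>x. is_solution \<delta> \<theta> \<eta> \<epsilon> x \<and> fst (x 0) > 0 \<and> snd (x 0) > 0
               \<longrightarrow> (x \<longlongrightarrow> E_star \<delta> \<theta> \<eta>) at_top)"
proof -
  obtain \<epsilon>0 c u2 h where "0 < \<epsilon>0"
    and system: "\<And>\<epsilon>. 0 < \<epsilon> \<Longrightarrow> \<epsilon> < \<epsilon>0 \<Longrightarrow> trapped_system \<delta> \<theta> \<eta> \<epsilon> (u_star \<delta> \<eta>) c u2 h"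
    using trapped_system_exists[OF assms(1-3,5-7)] by blast
  have "vfield \<delta> \<theta> \<eta> \<epsilon> (E_star \<delta> \<theta> \<eta>) = (0, 0)
      \<and> lyap_stable \<delta> \<theta> \<eta> \<epsilon> (E_star \<delta> \<theta> \<eta>)
      \<and> (\<forall>x. is_solution \<delta> \<theta> \<eta> \<epsilon> x \<and> fst (x 0) > 0 \<and> snd (x 0) > 0 \<longrightarrow> (x \<longlongrightarrow> E_star \<delta> \<theta> \<eta>) at_top)"
    if "0 < \<epsilon>" "\<epsilon> < \<epsilon>0" for \<epsilon>
  proof -
    interpret trapped_system \<delta> \<theta> \<eta> \<epsilon> "u_star \<delta> \<eta>" c u2 h using system[OF that] .
    show ?thesis
      using vfield_equilibrium lyap_stable_equilibrium tendsto_equilibrium_of_positive_start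
      by (simp add: E_star_def)
  qed
  with \<open>0 < \<epsilon>0\<close> show ?thesis by blast
qed

end
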